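(* Consider the natural covering maps $X_{ns}^{+}(9)\xrightarrow{\pi_1}X_B\xrightarrow{\pi_2}X_{ns}^{+}(3)\xrightarrow{\pi_3}X(1)$, each of degree $3$, and the points $\infty,\rho,i\in X(1)$ (images of $\infty,\ e^{2\pi i/3},\ i\in\mathcal{H}^{*}$). Their branching above these points is as follows. (1) Above $\infty$: $X_{ns}^{+}(3)$ has one cusp, with ramification index $3$ over $X(1)$; $X_B$ has one cusp, with ramification index $9$ over $X(1)$; $X_{ns}^{+}(9)$ has three cusps, each with ramification index $9$ over $X(1)$ (so $\pi_1$ is unramified at them). (2) Above $\rho$: $X_{ns}^{+}(3)$ has one point, with ramification index $3$ over $X(1)$; $X_B$ has three points and $X_{ns}^{+}(9)$ has nine points, each with ramification index $3$ over $X(1)$ (so $\pi_1,\pi_2$ are unramified there). (3) Above $i$: $X_{ns}^{+}(3)$ has three points (the images of $i$, $i+1$, $i-1$), all unramified over $X(1)$. Above the image of $i$, $\pi_2$ has two points (images of $i$ and $i+3$) with ramification indices $1$ and $2$; above the image of $i-1$, $\pi_2$ has two points (images of $i-1$ and $i-4$) with ramification indices $2$ and $1$; above the image of $i+1$, $\pi_2$ has three unramified points (images of $i+1,i+4,i-2$). Above each of the two points of $X_B$ that are ramified over $X(1)$ (images of $i+3$ and $i-1$), $\pi_1$ has three unramified points; above each of the images of $i,i+1,i+4,i-2$ in $X_B$, $\pi_1$ has two points with ramification indices $1$ and $2$; above the image of $i-4$ in $X_B$, $\pi_1$ has three unramified points.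
   Context: Let $\mathcal{H}$ be the complex upper half plane and $\mathcal{H}^{*}=\mathcal{H}\cup\mathbf{P}^{1}(\mathbf{Q})$. Let $C(9)\subset \mathrm{SL}_2(\mathbf{Z}/9\mathbf{Z})$ be the subgroup generated by $\begin{pmatrix}0&-1\\1&0\end{pmatrix}$, $\begin{pmatrix}-1&-4\\-4&1\end{pmatrix}$ and $\begin{pmatrix}1&-3\\3&1\end{pmatrix}$ (the intersection with $\mathrm{SL}_2$ of the normalizer of a non-split Cartan subgroup of $\mathrm{GL}_2(\mathbf{Z}/9\mathbf{Z})$), let $C(3)\subset\mathrm{SL}_2(\mathbf{Z}/3\mathbf{Z})$ be its reduction mod $3$, and let $B\subset\mathrm{SL}_2(\mathbf{Z}/9\mathbf{Z})$ be the subgroup generated by $C(9)$ and $\begin{pmatrix}-2&3\\3&4\end{pmatrix}$ (so $C(9)\subset B\subset r^{-1}(C(3))$, each of index $3$, where $r$ is reduction mod $3$). Let $\Gamma_{C(9)},\Gamma_B$ be the groups of $\gamma\in\mathrm{SL}_2(\mathbf{Z})$ whose reduction mod $9$ lies in $C(9)$, resp. $B$, and $\Gamma_{C(3)}$ the group of $\gamma\in\mathrm{SL}_2(\mathbf{Z})$ whose reduction mod $3$ lies in $C(3)$. Define $X(1)=\mathcal{H}^{*}/\mathrm{SL}_2(\mathbf{Z})$, $X_{ns}^{+}(3)=\mathcal{H}^{*}/\Gamma_{C(3)}$, $X_B=\mathcal{H}^{*}/\Gamma_B$, $X_{ns}^{+}(9)=\mathcal{H}^{*}/\Gamma_{C(9)}$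 as compact Riemann surfaces, with the natural projection maps between them. *)

theory Defs
  imports Complex_Main
begin

text \<open>2x2 integer matrices (a,b,c,d) = [[a,b],[c,d]].\<close>
type_synonym mat2 = "int \<times> int \<times> int \<times> int"

fun mmul :: "mat2 \<Rightarrow> mat2 \<Rightarrow> mat2" where
  "mmul (a,b,c,d) (e,f,g,h) = (a*e+b*g, a*f+b*h, c*e+d*g, c*f+d*h)"

fun mneg :: "mat2 \<Rightarrow> mat2" where
  "mneg (a,b,c,d) = (-a,-b,-c,-d)"

definition mone :: mat2 where "mone = (1,0,0,1)"

definition SL2Z :: "mat2 set" where
  "SL2Z = {(a,b,c,d). a*d - b*c = 1}"

fun red :: "int \<Rightarrow> mat2 \<Rightarrow> mat2" where
  "red n (a,b,c,d) = (a mod n, b mod n, c mod n, d mod n)"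

text \<open>Subgroup of SL_2(Z/nZ) generated by S (a finite group, so the generated
  submonoid is the generated subgroup).\<close>
inductive_set gen :: "int \<Rightarrow> mat2 set \<Rightarrow> mat2 set" for n S where
  gen_one: "red n mone \<in> gen n S"
| gen_mul: "s \<in> S \<Longrightarrow> g \<in> gen n S \<Longrightarrow> red n (mmul s g) \<in> gen n S"

definition C9 :: "mat2 set" where
  "C9 = gen 9 {(0,-1,1,0), (-1,-4,-4,1), (1,-3,3,1)}"

definition C3 :: "mat2 set" where
  "C3 = red 3 ` C9"

definition Bgrp :: "mat2 set" where
  "Bgrp = gen 9 {(0,-1,1,0), (-1,-4,-4,1), (1,-3,3,1), (-2,3,3,4)}"

definition Gamma_C9 :: "mat2 set" where "Gamma_C9 = {g \<in> SL2Z. red 9 g \<in> C9}"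
definition Gamma_B  :: "mat2 set" where "Gamma_B  = {g \<in> SL2Z. red 9 g \<in> Bgrp}"
definition Gamma_C3 :: "mat2 set" where "Gamma_C3 = {g \<in> SL2Z. red 3 g \<in> C3}"

text \<open>Points of H* = H \<union> P^1(Q): an upper-half-plane point, or a cusp
  (None = \<infinity>, Some x = x \<in> Q).\<close>
datatype hpt = Inner complex | Cusp "rat option"

definition Hstar :: "hpt set" where
  "Hstar = {Inner z | z. Im z > 0} \<union> range Cusp"

fun act :: "mat2 \<Rightarrow> hpt \<Rightarrow> hpt" where
  "act (a,b,c,d) (Inner z) =
     Inner ((of_int a * z + of_int b) / (of_int c * z + of_int d))"
| "act (a,b,c,d) (Cusp None) =
     (if c = 0 then Cusp None else Cusp (Some (of_int a / of_int c)))"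
| "act (a,b,c,d) (Cusp (Some x)) =
     (if of_int c * x + of_int d = 0 then Cusp None
      else Cusp (Some ((of_int a * x + of_int b) / (of_int c * x + of_int d))))"

text \<open>The point G\<tau> of X_G = H*/G.\<close>
definition orb :: "mat2 set \<Rightarrow> hpt \<Rightarrow> hpt set" where
  "orb G \<tau> = {act g \<tau> | g. g \<in> G}"

text \<open>Points of X_{G'} lying above the point G\<tau> of X_G (for G' \<subseteq> G).\<close>
definition fiber :: "mat2 set \<Rightarrow> mat2 set \<Rightarrow> hpt \<Rightarrow> hpt set set" where
  "fiber G' G \<tau> = {orb G' x | x. x \<in> orb G \<tau>}"

definition stab :: "mat2 set \<Rightarrow> hpt \<Rightarrow> mat2 set" where
  "stab G \<tau> = {g \<in> G. act g \<tau> = \<tau>}"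

definition pm :: "mat2 set \<Rightarrow> mat2 set" where
  "pm S = S \<union> mneg ` S"

text \<open>Ramification index of X_{G'} \<rightarrow> X_G at the point G'\<tau>:
  the index [\<plusminus>G_\<tau> : \<plusminus>G'_\<tau>] of stabilizers (equivalently of their images in PSL_2),
  the standard formula (Diamond--Shurman, Sect. 2.3) for the ramification of the
  natural projection of compact modular curves.\<close>
definition ram :: "mat2 set \<Rightarrow> mat2 set \<Rightarrow> hpt \<Rightarrow> nat" where
  "ram G' G \<tau> = card ((\<lambda>g. mmul g ` pm (stab G' \<tau>)) ` pm (stab G \<tau>))"

definition cinf :: hpt where "cinf = Cusp None"
definition rho :: hpt where "rho = Inner (Complex (-1/2) (sqrt 3 / 2))"
definition pti :: "int \<Rightarrow> hpt" where "pti k = Inner (Complex (of_int k) 1)"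

end

theory Submission
  imports Defs
begin

text \<open>All groups involved contain \<open>\<Gamma>(9)\<close> and \<open>-1\<close>, so everything can be decided modulo 9.
  Two points \<open>g\<tau>\<close>, \<open>h\<tau>\<close> of \<open>\<H>\<^sup>*\<close> are identified by \<open>\<Gamma>\<close> iff \<open>h s g\<^sup>-\<^sup>1 \<in> \<Gamma>\<close> for some \<open>s\<close> in the
  stabiliser of \<open>\<tau>\<close>, which for \<open>\<tau> = \<infinity>, i, \<rho>\<close> is known explicitly and is finite modulo 9.
  Since \<open>T\<close> and \<open>S\<close> generate \<open>SL\<^sub>2(\<int>)\<close>, a finite list of right coset representatives of
  \<open>\<Gamma>\<close> can be certified by checking that it is permuted by \<open>T\<^sup>\<plusminus>\<^sup>1\<close> and \<open>S\<^sup>-\<^sup>1\<close>; the fibres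
  then become finite lists. The ramification index \<open>[\<plusminus>\<Gamma>'\<^sub>x : \<plusminus>\<Gamma>\<^sub>x]\<close> at \<open>x = g\<tau>\<close> becomes,
  after conjugating by \<open>g\<close>, an index of two subgroups of the stabiliser of \<open>\<tau>\<close> containing its
  kernel modulo 9, hence an index of finite groups of matrices modulo 9. The remaining finite
  checks are carried out by evaluation.\<close>

fun minv :: "mat2 \<Rightarrow> mat2" where
  "minv (a,b,c,d) = (d,-b,-c,a)"

fun mdet :: "mat2 \<Rightarrow> int" where
  "mdet (a,b,c,d) = a*d - b*c"

lemma SL2Z_iff_mdet: "g \<in> SL2Z \<longleftrightarrow> mdet g = 1"
  by (cases g) (auto simp: SL2Z_def)

lemma mmul_assoc: "mmul (mmul x y) z = mmul x (mmul y z)"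
  by (cases x; cases y; cases z) (simp add: algebra_simps)

lemma mmul_mone [simp]: "mmul mone g = g" "mmul g mone = g"
  by (cases g, simp add: mone_def)+

lemma mdet_mmul: "mdet (mmul g h) = mdet g * mdet h"
  by (cases g; cases h) (simp add: algebra_simps)

lemma SL2Z_mmul: "g \<in> SL2Z \<Longrightarrow> h \<in> SL2Z \<Longrightarrow> mmul g h \<in> SL2Z"
  by (simp add: SL2Z_iff_mdet mdet_mmul)

lemma SL2Z_minv: "g \<in> SL2Z \<Longrightarrow> minv g \<in> SL2Z"
  by (cases g) (simp add: SL2Z_iff_mdet algebra_simps)

lemma SL2Z_mone: "mone \<in> SL2Z"
  by (simp add: SL2Z_def mone_def)

lemma SL2Z_T: "(1,k,0,1) \<in> SL2Z"
  by (simp add: SL2Z_def)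

lemma mmul_minv_left: "g \<in> SL2Z \<Longrightarrow> mmul (minv g) g = mone"
  and mmul_minv_right: "g \<in> SL2Z \<Longrightarrow> mmul g (minv g) = mone"
  by (cases g, auto simp: SL2Z_iff_mdet mone_def algebra_simps)+

lemma mmul_minv_cancel_left: "g \<in> SL2Z \<Longrightarrow> mmul (minv g) (mmul g x) = x"
  and mmul_minv_cancel_right: "g \<in> SL2Z \<Longrightarrow> mmul g (mmul (minv g) x) = x"
  by (simp_all add: mmul_assoc[symmetric] mmul_minv_left mmul_minv_right)

lemma minv_minv [simp]: "minv (minv g) = g"
  by (cases g) simp

lemma minv_mmul: "minv (mmul g h) = mmul (minv h) (minv g)"
  by (cases g; cases h) (simp add: algebra_simps)

lemma mneg_eq_mmul: "mneg g = mmul (-1,0,0,-1) g"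
  by (cases g) simp

lemma mod_bilinear_left: "((x::int) mod n * y + z mod n * w) mod n = (x*y + z*w) mod n"
  by (metis mod_add_eq mod_mult_left_eq)

lemma mod_bilinear_right: "(y * ((x::int) mod n) + w * (z mod n)) mod n = (y*x + w*z) mod n"
  by (metis mod_add_eq mod_mult_right_eq)

lemma red_mmul_left: "red n (mmul (red n a) b) = red n (mmul a b)"
  by (cases a; cases b) (simp add: mod_bilinear_left)

lemma red_mmul_right: "red n (mmul a (red n b)) = red n (mmul a b)"
  by (cases a; cases b) (simp add: mod_bilinear_right)

lemma red_minv: "red n (minv (red n a)) = red n (minv a)"
  by (cases a) (simp add: mod_minus_eq)

lemma red_idem [simp]: "red n (red n g) = red n g"
  by (cases g) simp

lemma red_3_red_9 [simp]: "red 3 (red 9 g) = red 3 g"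
  by (cases g) (simp add: mod_mod_cancel)

lemma red_mmul_cong:
  "red n w = red n s \<Longrightarrow> red n (mmul (mmul h w) x) = red n (mmul (mmul h s) x)"
  by (metis red_mmul_left red_mmul_right)


section \<open>The action of \<open>SL\<^sub>2(\<int>)\<close> on the upper half plane and on \<open>\<infinity>\<close>\<close>

text \<open>The action is only shown to compose correctly on \<open>\<infinity>\<close> and on the upper half plane; every point in
  the theorem is a translate of one of the base points \<open>\<infinity>\<close>, \<open>i\<close>, \<open>\<rho>\<close>.\<close>

definition base_point :: "hpt \<Rightarrow> bool" where
  "base_point t \<longleftrightarrow> t = Cusp None \<or> (\<exists>z. t = Inner z \<and> Im z > 0)"

lemma base_point_cinf: "base_point cinf"
  and base_point_pti: "base_point (pti k)"
  and base_point_rho: "base_point rho"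
  by (simp_all add: base_point_def cinf_def pti_def rho_def)

lemma mobius_denom_nonzero:
  assumes "Im z > 0" "(c,d) \<noteq> (0::int,0::int)"
  shows "of_int c * z + of_int d \<noteq> 0"
proof
  assume h: "of_int c * z + of_int d = 0"
  then have "Im (of_int c * z + of_int d) = 0" by simp
  then have "c = 0" using assms(1) by simp
  with h assms(2) show False by simp
qed

lemma divide_divide_same: "(D::'a::field) \<noteq> 0 \<Longrightarrow> (A / D) / (B / D) = A / B"
  by (cases "B = 0") (simp_all add: field_simps)

lemma mobius_mobius:
  fixes z :: "'a::field"
  assumes "p * z + q \<noteq> 0"
  shows "(a * ((e*z + f) / (p*z + q)) + b) / (c * ((e*z + f) / (p*z + q)) + d)
       = ((a*e + b*p) * z + (a*f + b*q)) / ((c*e + d*p) * z + (c*f + d*q))"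
proof -
  have "a * ((e*z + f) / (p*z + q)) + b = ((a*e + b*p) * z + (a*f + b*q)) / (p*z + q)"
    "c * ((e*z + f) / (p*z + q)) + d = ((c*e + d*p) * z + (c*f + d*q)) / (p*z + q)"
    using assms by (simp_all add: field_simps)
  with assms show ?thesis by (simp add: divide_divide_same)
qed

lemma act_mmul:
  assumes "base_point t" "g \<in> SL2Z" "h \<in> SL2Z"
  shows "act g (act h t) = act (mmul g h) t"
proof -
  obtain a b c d where g: "g = (a,b,c,d)" by (cases g)
  obtain e f p q where h: "h = (e,f,p,q)" by (cases h)
  from assms(3) h have det: "e*q - f*p = 1" by (simp add: SL2Z_def)
  from assms(1) consider "t = Cusp None" | z where "t = Inner z" "Im z > 0"
    unfolding base_point_def by blast
  then show ?thesis
  proof cases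
    case 1
    show ?thesis
    proof (cases "p = 0")
      case True
      then have "e \<noteq> 0" using det by auto
      with True show ?thesis by (simp add: 1 g h)
    next
      case False
      have denom: "of_int c * (of_int e / of_int p) + of_int d = (of_int (c*e + d*p) / of_int p :: rat)"
        and numer: "of_int a * (of_int e / of_int p) + of_int b = (of_int (a*e + b*p) / of_int p :: rat)"
        using False by (simp_all add: field_simps)
      have "of_int c * (of_int e / of_int p) + of_int d = (0::rat) \<longleftrightarrow> c*e + d*p = 0"
        unfolding denom using False by (metis divide_eq_0_iff of_int_eq_0_iff)
      moreover have "(of_int a * (of_int e / of_int p) + of_int b) / (of_int c * (of_int e / of_int p) + of_int d)
          = (of_int (a*e + b*p) / of_int (c*e + d*p) :: rat)"
        unfolding denom numer using False by (simp add: divide_divide_same)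
      ultimately show ?thesis using False by (simp add: 1 g h)
    qed
  next
    case 2
    have "of_int p * z + of_int q \<noteq> 0"
    proof (rule mobius_denom_nonzero[OF 2(2)])
      show "(p, q) \<noteq> (0, 0)" using det by auto
    qed
    from mobius_mobius[OF this] show ?thesis by (simp add: 2 g h)
  qed
qed

lemma act_mone: "base_point t \<Longrightarrow> act mone t = t"
  by (auto simp: base_point_def mone_def)

lemma act_mneg:
  assumes "base_point t"
  shows "act (mneg g) t = act g t"
proof -
  obtain a b c d where g: "g = (a,b,c,d)" by (cases g)
  have "(- (of_int a * z) - of_int b) / (- (of_int c * z) - of_int d) =
        (of_int a * z + of_int b) / (of_int c * z + of_int d)" for z :: complex
  proof -
    have "- (of_int a * z) - of_int b = - (of_int a * z + of_int b)"
      "- (of_int c * z) - of_int d = - (of_int c * z + of_int d)" by simp_all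
    then show ?thesis by (simp only: minus_divide_divide)
  qed
  then show ?thesis using assms by (auto simp: base_point_def g)
qed

lemma act_eq_iff_stab:
  assumes t: "base_point t" and g: "g \<in> SL2Z" and h: "h \<in> SL2Z"
  shows "act g t = act h t \<longleftrightarrow> mmul (minv h) g \<in> stab SL2Z t"
proof
  assume e: "act g t = act h t"
  have "act (mmul (minv h) g) t = act (minv h) (act h t)"
    using e act_mmul[OF t SL2Z_minv[OF h] g] by simp
  also have "\<dots> = t"
    using act_mmul[OF t SL2Z_minv[OF h] h] by (simp add: mmul_minv_left[OF h] act_mone[OF t])
  finally show "mmul (minv h) g \<in> stab SL2Z t"
    using g h by (simp add: stab_def SL2Z_mmul SL2Z_minv)
next
  assume s: "mmul (minv h) g \<in> stab SL2Z t"
  then have "act h (act (mmul (minv h) g) t) = act h t" by (simp add: stab_def)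
  moreover have "act h (act (mmul (minv h) g) t) = act g t"
    using act_mmul[OF t h SL2Z_mmul[OF SL2Z_minv[OF h] g]] by (simp add: mmul_minv_cancel_right[OF h])
  ultimately show "act g t = act h t" by simp
qed

lemma stab_SL2Z_mmul: "base_point t \<Longrightarrow> s \<in> stab SL2Z t \<Longrightarrow> u \<in> stab SL2Z t \<Longrightarrow> mmul s u \<in> stab SL2Z t"
  by (simp add: stab_def SL2Z_mmul act_mmul[symmetric])

lemma stab_SL2Z_minv: "base_point t \<Longrightarrow> s \<in> stab SL2Z t \<Longrightarrow> minv s \<in> stab SL2Z t"
  using act_eq_iff_stab[of t mone s] by (simp add: stab_def SL2Z_minv SL2Z_mone act_mone)

lemma stab_SL2Z_mone: "base_point t \<Longrightarrow> mone \<in> stab SL2Z t"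
  by (simp add: stab_def SL2Z_mone act_mone)


section \<open>The stabilisers of \<open>\<infinity>\<close>, \<open>i\<close> and \<open>\<rho>\<close>\<close>

lemma int_square_le_1: "(x::int) * x \<le> 1 \<Longrightarrow> x \<in> {-1,0,1}"
proof -
  assume h: "x * x \<le> 1"
  have "\<bar>x\<bar> \<le> 1"
  proof (rule ccontr)
    assume "\<not> \<bar>x\<bar> \<le> 1"
    then have "\<bar>x\<bar> * \<bar>x\<bar> \<ge> 2 * 2" by (intro mult_mono) auto
    then show False using h by (simp add: abs_mult[symmetric])
  qed
  then show ?thesis by auto
qed

lemma int_sum_squares_eq_1:
  "(x::int) * x + y * y = 1 \<Longrightarrow> (x = 0 \<and> (y = 1 \<or> y = -1)) \<or> (y = 0 \<and> (x = 1 \<or> x = -1))"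
proof -
  assume h: "x * x + y * y = 1"
  then have "x * x \<le> 1" "y * y \<le> 1"
    by (smt (verit) zero_le_square)+
  then have "x \<in> {-1,0,1}" "y \<in> {-1,0,1}" using int_square_le_1 by blast+
  then show ?thesis using h by auto
qed

lemma act_T_i: "act (1,k,0,1) (pti 0) = pti k"
  by (simp add: pti_def complex_eq_iff)

lemma act_fixes_i: "a = d \<Longrightarrow> b = -c \<Longrightarrow> (c,d) \<noteq> (0,0) \<Longrightarrow> act (a,b,c,d) (pti 0) = pti 0"
proof -
  assume h: "a = d" "b = -c" "(c,d) \<noteq> (0,0)"
  let ?i = "Complex 0 1"
  have nz: "of_int c * ?i + of_int d \<noteq> 0" by (rule mobius_denom_nonzero) (use h in simp_all)
  have "of_int a * ?i + of_int b = ?i * (of_int c * ?i + of_int d)"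
    using h by (simp add: complex_eq_iff)
  with nz show ?thesis by (simp add: pti_def divide_eq_eq)
qed

lemma stab_SL2Z_i: "stab SL2Z (pti 0) = {(1,0,0,1), (0,-1,1,0), (-1,0,0,-1), (0,1,-1,0)}"
proof (intro equalityI subsetI)
  fix s assume s_stab: "s \<in> stab SL2Z (pti 0)"
  obtain a b c d where s: "s = (a,b,c,d)" by (cases s)
  have det: "a*d - b*c = 1" using s_stab s by (simp add: stab_def SL2Z_def)
  let ?i = "Complex 0 1"
  have nz: "of_int c * ?i + of_int d \<noteq> 0"
    by (rule mobius_denom_nonzero) (use det in auto)
  have "(of_int a * ?i + of_int b) / (of_int c * ?i + of_int d) = ?i"
    using s_stab s by (simp add: stab_def pti_def)
  then have "of_int a * ?i + of_int b = ?i * (of_int c * ?i + of_int d)"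
    using nz by (simp add: divide_eq_eq)
  then have "b = -c" "a = d" by (simp_all add: complex_eq_iff)
  with det have "a*a + c*c = 1" by (simp add: algebra_simps)
  from int_sum_squares_eq_1[OF this] \<open>b = -c\<close> \<open>a = d\<close> s
  show "s \<in> {(1,0,0,1), (0,-1,1,0), (-1,0,0,-1), (0,1,-1,0)}" by auto
qed (auto simp: stab_def SL2Z_def act_fixes_i)

lemma act_fixes_rho: "a = d - c \<Longrightarrow> b = -c \<Longrightarrow> (c,d) \<noteq> (0,0) \<Longrightarrow> act (a,b,c,d) rho = rho"
proof -
  assume h: "a = d - c" "b = -c" "(c,d) \<noteq> (0,0)"
  define w where "w = Complex (-1/2) (sqrt 3 / 2)"
  have ww: "w * w = - w - 1" by (simp add: w_def complex_eq_iff)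
  have nz: "of_int c * w + of_int d \<noteq> 0" by (rule mobius_denom_nonzero) (use h in \<open>simp_all add: w_def\<close>)
  have "w * (of_int c * w + of_int d) = of_int c * (w * w) + of_int d * w" by (simp add: algebra_simps)
  also have "\<dots> = of_int a * w + of_int b" unfolding h(1) h(2) by (simp add: ww algebra_simps)
  finally have "(of_int a * w + of_int b) / (of_int c * w + of_int d) = w"
    using nz by (simp add: divide_eq_eq)
  then show ?thesis by (simp add: rho_def w_def)
qed

lemma eisenstein_norm_eq_1:
  assumes "(d::int) * d - c * d + c * c = 1"
  shows "(c = 0 \<and> (d = 1 \<or> d = -1)) \<or> (c = 1 \<and> (d = 0 \<or> d = 1)) \<or> (c = -1 \<and> (d = 0 \<or> d = -1))"
proof -
  have "(2*d - c) * (2*d - c) + 3 * (c*c) = 4" using assms by (simp add: algebra_simps)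
  then have "c \<in> {-1,0,1}" by (intro int_square_le_1) (smt (verit) zero_le_square)
  then show ?thesis
  proof (elim insertE emptyE)
    assume "c = -1" with assms have "d * (d + 1) = 0" by (simp add: algebra_simps)
    with \<open>c = -1\<close> show ?thesis by auto
  next
    assume "c = 0" with assms have "d * d + 0 * 0 = 1" by simp
    with \<open>c = 0\<close> show ?thesis using int_sum_squares_eq_1[of d 0] by auto
  next
    assume "c = 1" with assms have "d * (d - 1) = 0" by (simp add: algebra_simps)
    with \<open>c = 1\<close> show ?thesis by auto
  qed
qed

lemma stab_SL2Z_rho:
  "stab SL2Z rho = {(1,0,0,1), (-1,0,0,-1), (-1,-1,1,0), (1,1,-1,0), (0,-1,1,1), (0,1,-1,-1)}"
proof (intro equalityI subsetI)
  fix s assume s_stab: "s \<in> stab SL2Z rho"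
  obtain a b c d where s: "s = (a,b,c,d)" by (cases s)
  have det: "a*d - b*c = 1" using s_stab s by (simp add: stab_def SL2Z_def)
  define w where "w = Complex (-1/2) (sqrt 3 / 2)"
  have nz: "of_int c * w + of_int d \<noteq> 0"
    by (rule mobius_denom_nonzero) (use det in \<open>auto simp: w_def\<close>)
  have "(of_int a * w + of_int b) / (of_int c * w + of_int d) = w"
    using s_stab s by (simp add: stab_def rho_def w_def)
  then have eq: "of_int a * w + of_int b = w * (of_int c * w + of_int d)"
    using nz by (simp add: divide_eq_eq)
  have "Im (of_int a * w + of_int b) = Im (w * (of_int c * w + of_int d))" using eq by simp
  then have "a * sqrt 3 / 2 = (d - c) * sqrt 3 / 2" by (simp add: w_def algebra_simps)
  then have ad: "a = d - c" by simp
  have "Re (of_int a * w + of_int b) = Re (w * (of_int c * w + of_int d))" using eq by simp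
  then have "- a / 2 + b = c * (1/4 - sqrt 3 * sqrt 3 / 4) - d / 2"
    by (simp add: w_def algebra_simps)
  then have "- a / 2 + b = - c / 2 - d / 2" by simp
  then have "real_of_int (2*b) = real_of_int (a - c - d)" by simp
  then have bc: "b = -c" using ad by linarith
  have "d*d - c*d + c*c = 1" using det ad bc by (simp add: algebra_simps)
  from eisenstein_norm_eq_1[OF this] ad bc s
  show "s \<in> {(1,0,0,1), (-1,0,0,-1), (-1,-1,1,0), (1,1,-1,0), (0,-1,1,1), (0,1,-1,-1)}" by auto
qed (auto simp: stab_def SL2Z_def act_fixes_rho)

lemma stab_SL2Z_cinf: "stab SL2Z cinf = range (\<lambda>n. (1,n,0,1)) \<union> range (\<lambda>n. (-1,n,0,-1))"
proof (intro equalityI subsetI)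
  fix s assume s_stab: "s \<in> stab SL2Z cinf"
  obtain a b c d where s: "s = (a,b,c,d)" by (cases s)
  have det: "a*d - b*c = 1" using s_stab s by (simp add: stab_def SL2Z_def)
  have "c = 0" using s_stab s by (simp add: stab_def cinf_def split: if_splits)
  with det have "(a = 1 \<and> d = 1) \<or> (a = -1 \<and> d = -1)" by (simp add: zmult_eq_1_iff)
  with s \<open>c = 0\<close> show "s \<in> range (\<lambda>n. (1,n,0,1)) \<union> range (\<lambda>n. (-1,n,0,-1))" by auto
qed (auto simp: stab_def SL2Z_def cinf_def)

definition stab_reps :: "hpt \<Rightarrow> mat2 list \<Rightarrow> bool" where
  "stab_reps t SW \<longleftrightarrow> base_point t \<and> set SW \<subseteq> stab SL2Z t \<and> red 9 ` stab SL2Z t \<subseteq> red 9 ` set SW"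

definition stab_i :: "mat2 list" where
  "stab_i = [(1,0,0,1), (0,-1,1,0), (-1,0,0,-1), (0,1,-1,0)]"

definition stab_rho :: "mat2 list" where
  "stab_rho = [(1,0,0,1), (-1,0,0,-1), (-1,-1,1,0), (1,1,-1,0), (0,-1,1,1), (0,1,-1,-1)]"

definition stab_cinf_mod9 :: "mat2 list" where
  "stab_cinf_mod9 = map (\<lambda>n. (1,n,0,1)) [0..8] @ map (\<lambda>n. (-1,n,0,-1)) [0..8]"

lemma stab_reps_i: "stab_reps (pti 0) stab_i"
  by (simp add: stab_reps_def stab_SL2Z_i stab_i_def base_point_pti)

lemma stab_reps_rho: "stab_reps rho stab_rho"
  by (simp add: stab_reps_def stab_SL2Z_rho stab_rho_def base_point_rho)

lemma stab_reps_cinf: "stab_reps cinf stab_cinf_mod9"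
proof -
  have "red 9 s \<in> red 9 ` set stab_cinf_mod9" if "s \<in> stab SL2Z cinf" for s
  proof -
    from that obtain e n where s: "s = (e,n,0,e)" "e = 1 \<or> e = -1"
      by (auto simp: stab_SL2Z_cinf)
    have "n mod 9 \<in> set [0..8]" by simp
    then have "(e, n mod 9, 0, e) \<in> set stab_cinf_mod9"
      using s(2) by (auto simp: stab_cinf_mod9_def)
    moreover have "red 9 s = red 9 (e, n mod 9, 0, e)" by (simp add: s)
    ultimately show ?thesis by blast
  qed
  moreover have "set stab_cinf_mod9 \<subseteq> stab SL2Z cinf"
    by (auto simp: stab_SL2Z_cinf stab_cinf_mod9_def)
  ultimately show ?thesis by (auto simp: stab_reps_def base_point_cinf)
qed


section \<open>Congruence subgroups of level 9\<close>

text \<open>A subgroup of \<open>SL\<^sub>2(\<int>/9\<int>)\<close>, given by its membership predicate on reduced matrices,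
  that contains \<open>-1 = (8,0,0,8)\<close>; the latter makes the \<open>\<plusminus>\<close> in \<open>ram\<close> harmless.\<close>

definition mod9_subgroup :: "(mat2 \<Rightarrow> bool) \<Rightarrow> bool" where
  "mod9_subgroup P \<longleftrightarrow> P (1,0,0,1) \<and> P (8,0,0,8)
     \<and> (\<forall>m m'. P m \<longrightarrow> P m' \<longrightarrow> P (red 9 (mmul m m'))) \<and> (\<forall>m. P m \<longrightarrow> P (red 9 (minv m)))"

definition Gamma9 :: "(mat2 \<Rightarrow> bool) \<Rightarrow> mat2 set" where
  "Gamma9 P = {g \<in> SL2Z. P (red 9 g)}"

definition mconj :: "mat2 \<Rightarrow> mat2 \<Rightarrow> mat2" where
  "mconj g s = mmul (mmul g s) (minv g)"

lemma mod9_subgroup_top: "mod9_subgroup (\<lambda>_. True)"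
  by (simp add: mod9_subgroup_def)

lemma Gamma9_top: "Gamma9 (\<lambda>_. True) = SL2Z"
  by (simp add: Gamma9_def)

lemma Gamma9_subset_SL2Z: "Gamma9 P \<subseteq> SL2Z"
  by (auto simp: Gamma9_def)

lemma Gamma9_mono: "P \<le> Q \<Longrightarrow> Gamma9 P \<subseteq> Gamma9 Q"
  by (auto simp: Gamma9_def)

lemma Gamma9_mmul:
  assumes "mod9_subgroup P" "g \<in> Gamma9 P" "h \<in> Gamma9 P"
  shows "mmul g h \<in> Gamma9 P"
proof -
  have "P (red 9 (mmul (red 9 g) (red 9 h)))"
    using assms unfolding Gamma9_def mod9_subgroup_def by blast
  with assms show ?thesis by (simp add: Gamma9_def SL2Z_mmul red_mmul_left red_mmul_right)
qed

lemma Gamma9_minv: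
  assumes "mod9_subgroup P" "g \<in> Gamma9 P"
  shows "minv g \<in> Gamma9 P"
proof -
  have "P (red 9 (minv (red 9 g)))"
    using assms unfolding Gamma9_def mod9_subgroup_def by blast
  with assms show ?thesis by (simp add: Gamma9_def SL2Z_minv red_minv)
qed

lemma Gamma9_mneg:
  assumes "mod9_subgroup P" "g \<in> Gamma9 P"
  shows "mneg g \<in> Gamma9 P"
proof -
  have "(-1,0,0,-1) \<in> Gamma9 P"
    using assms(1) by (simp add: Gamma9_def mod9_subgroup_def SL2Z_def)
  from Gamma9_mmul[OF assms(1) this assms(2)] show ?thesis by (simp add: mneg_eq_mmul)
qed

lemma Gamma9_mconj_iff:
  assumes P: "mod9_subgroup P" and g: "g \<in> Gamma9 P" and x: "x \<in> SL2Z"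
  shows "mconj g x \<in> Gamma9 P \<longleftrightarrow> x \<in> Gamma9 P"
proof
  have g_inv: "minv g \<in> Gamma9 P" by (rule Gamma9_minv[OF P g])
  have gS: "g \<in> SL2Z" using g Gamma9_subset_SL2Z by blast
  assume "mconj g x \<in> Gamma9 P"
  then have "mmul (mmul (minv g) (mconj g x)) g \<in> Gamma9 P"
    by (intro Gamma9_mmul[OF P _ g] Gamma9_mmul[OF P g_inv])
  then show "x \<in> Gamma9 P"
    by (simp add: mconj_def mmul_assoc mmul_minv_cancel_left[OF gS] mmul_minv_left[OF gS])
next
  assume "x \<in> Gamma9 P"
  then show "mconj g x \<in> Gamma9 P"
    unfolding mconj_def by (intro Gamma9_mmul[OF P _ Gamma9_minv[OF P g]] Gamma9_mmul[OF P g])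
qed


lemma orb_act:
  assumes "base_point t" "G \<subseteq> SL2Z" "g \<in> SL2Z"
  shows "orb G (act g t) = {act (mmul y g) t | y. y \<in> G}"
  unfolding orb_def using assms act_mmul[of t _ g] by (metis (no_types, lifting) subsetD)

lemma act_mem_orb:
  assumes t: "base_point t" and g0: "g0 \<in> SL2Z" and x: "x \<in> SL2Z" and P: "P (red 9 (mmul x (minv g0)))"
  shows "act x t \<in> orb (Gamma9 P) (act g0 t)"
proof -
  have "mmul x (minv g0) \<in> Gamma9 P" using P by (simp add: Gamma9_def SL2Z_mmul SL2Z_minv g0 x)
  moreover have "mmul (mmul x (minv g0)) g0 = x" by (simp add: mmul_assoc mmul_minv_left g0)
  ultimately show ?thesis
    unfolding orb_act[OF t Gamma9_subset_SL2Z g0] by (metis (mono_tags, lifting) mem_Collect_eq)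
qed

lemma orb_act_mmul:
  assumes t: "base_point t" and P: "mod9_subgroup P" and \<gamma>: "\<gamma> \<in> Gamma9 P" and r: "r \<in> SL2Z"
  shows "orb (Gamma9 P) (act (mmul \<gamma> r) t) = orb (Gamma9 P) (act r t)"
proof -
  have \<gamma>S: "\<gamma> \<in> SL2Z" using \<gamma> Gamma9_subset_SL2Z by blast
  have "{act (mmul y (mmul \<gamma> r)) t |y. y \<in> Gamma9 P} = {act (mmul y r) t |y. y \<in> Gamma9 P}"
  proof (intro equalityI subsetI)
    fix x assume "x \<in> {act (mmul y (mmul \<gamma> r)) t |y. y \<in> Gamma9 P}"
    then obtain y where "y \<in> Gamma9 P" "x = act (mmul (mmul y \<gamma>) r) t" by (auto simp: mmul_assoc)
    with Gamma9_mmul[OF P _ \<gamma>] show "x \<in> {act (mmul y r) t |y. y \<in> Gamma9 P}" by blast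
  next
    fix x assume "x \<in> {act (mmul y r) t |y. y \<in> Gamma9 P}"
    then obtain y where "y \<in> Gamma9 P" "x = act (mmul (mmul y (minv \<gamma>)) (mmul \<gamma> r)) t"
      by (auto simp: mmul_assoc mmul_minv_cancel_left \<gamma>S)
    with Gamma9_mmul[OF P _ Gamma9_minv[OF P \<gamma>]]
    show "x \<in> {act (mmul y (mmul \<gamma> r)) t |y. y \<in> Gamma9 P}" by blast
  qed
  then show ?thesis by (simp add: orb_act[OF t Gamma9_subset_SL2Z] SL2Z_mmul \<gamma>S r)
qed

lemma orb_act_eq_iff_mem:
  assumes t: "base_point t" and P: "mod9_subgroup P" and g: "g \<in> SL2Z" and h: "h \<in> SL2Z"
  shows "orb (Gamma9 P) (act g t) = orb (Gamma9 P) (act h t) \<longleftrightarrow> act g t \<in> orb (Gamma9 P) (act h t)"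
proof
  have "act g t \<in> orb (Gamma9 P) (act g t)"
    using act_mem_orb[OF t g g, of P] P by (simp add: mmul_minv_right g mod9_subgroup_def mone_def)
  then show "orb (Gamma9 P) (act g t) = orb (Gamma9 P) (act h t) \<Longrightarrow> act g t \<in> orb (Gamma9 P) (act h t)"
    by simp
next
  assume "act g t \<in> orb (Gamma9 P) (act h t)"
  then obtain d where "d \<in> Gamma9 P" "act g t = act (mmul d h) t"
    using orb_act[OF t Gamma9_subset_SL2Z h] by blast
  with orb_act_mmul[OF t P _ h] show "orb (Gamma9 P) (act g t) = orb (Gamma9 P) (act h t)" by simp
qed

lemma act_mem_orb_iff:
  assumes t: "base_point t" and P: "mod9_subgroup P" and g: "g \<in> SL2Z" and h: "h \<in> SL2Z"
  shows "act g t \<in> orb (Gamma9 P) (act h t) \<longleftrightarrow> (\<exists>s\<in>stab SL2Z t. P (red 9 (mmul (mmul h s) (minv g))))"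
proof
  assume "act g t \<in> orb (Gamma9 P) (act h t)"
  then obtain y where y: "y \<in> Gamma9 P" "act g t = act (mmul y h) t"
    using orb_act[OF t Gamma9_subset_SL2Z h] by blast
  have yS: "y \<in> SL2Z" using y(1) Gamma9_subset_SL2Z by blast
  define s where "s = mmul (minv (mmul y h)) g"
  have "s \<in> stab SL2Z t"
    unfolding s_def using act_eq_iff_stab[OF t g SL2Z_mmul[OF yS h]] y(2) by simp
  moreover have "mmul (mmul h s) (minv g) = minv y"
    by (simp add: s_def minv_mmul mmul_assoc mmul_minv_right g mmul_minv_cancel_right h)
  moreover have "P (red 9 (minv y))" using Gamma9_minv[OF P y(1)] by (simp add: Gamma9_def)
  ultimately show "\<exists>s\<in>stab SL2Z t. P (red 9 (mmul (mmul h s) (minv g)))" by metis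
next
  assume "\<exists>s\<in>stab SL2Z t. P (red 9 (mmul (mmul h s) (minv g)))"
  then obtain s where s: "s \<in> stab SL2Z t" "P (red 9 (mmul (mmul h s) (minv g)))" by blast
  have sS: "s \<in> SL2Z" using s(1) by (simp add: stab_def)
  have "mmul (mmul h s) (minv g) \<in> Gamma9 P"
    using s(2) by (simp add: Gamma9_def SL2Z_mmul SL2Z_minv g h sS)
  from Gamma9_minv[OF P this]
  have "P (red 9 (mmul (mmul g (minv s)) (minv h)))" by (simp add: Gamma9_def minv_mmul mmul_assoc)
  from act_mem_orb[where P = P, OF t h SL2Z_mmul[OF g SL2Z_minv[OF sS]] this]
  show "act g t \<in> orb (Gamma9 P) (act h t)"
    using stab_SL2Z_minv[OF t s(1)] act_mmul[OF t g SL2Z_minv[OF sS]] by (simp add: stab_def)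
qed

lemma orb_act_eq_iff_mod9:
  assumes SW: "stab_reps t SW" and P: "mod9_subgroup P" and g: "g \<in> SL2Z" and h: "h \<in> SL2Z"
  shows "orb (Gamma9 P) (act g t) = orb (Gamma9 P) (act h t)
    \<longleftrightarrow> (\<exists>s\<in>set SW. P (red 9 (mmul (mmul h s) (minv g))))"
proof -
  have t: "base_point t" using SW by (simp add: stab_reps_def)
  have "\<exists>w\<in>set SW. P (red 9 (mmul (mmul h w) (minv g)))"
    if "s \<in> stab SL2Z t" "P (red 9 (mmul (mmul h s) (minv g)))" for s
  proof -
    have "red 9 s \<in> red 9 ` set SW" using SW that(1) unfolding stab_reps_def by blast
    then obtain w where "w \<in> set SW" "red 9 w = red 9 s" by (elim imageE) simp
    with that(2) red_mmul_cong[of 9 w s h "minv g"] show ?thesis by metis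
  qed
  moreover have "set SW \<subseteq> stab SL2Z t" using SW by (simp add: stab_reps_def)
  ultimately show ?thesis
    unfolding orb_act_eq_iff_mem[OF t P g h] act_mem_orb_iff[OF t P g h] by blast
qed


section \<open>Right coset representatives\<close>

context
  fixes Q :: "mat2 \<Rightarrow> bool"
  assumes one: "Q mone"
    and T: "\<And>h. h \<in> SL2Z \<Longrightarrow> Q h \<Longrightarrow> Q (mmul h (1,1,0,1))"
    and T_inv: "\<And>h. h \<in> SL2Z \<Longrightarrow> Q h \<Longrightarrow> Q (mmul h (1,-1,0,1))"
    and S_inv: "\<And>h. h \<in> SL2Z \<Longrightarrow> Q h \<Longrightarrow> Q (mmul h (0,1,-1,0))"
begin

lemma right_mult_T_pow: "h \<in> SL2Z \<Longrightarrow> Q h \<Longrightarrow> Q (mmul h (1,k,0,1))"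
proof (induction k rule: int_induct[where k=0])
  case base
  then show ?case by (simp add: mone_def[symmetric])
next
  case (step1 i)
  have "mmul h (1,i+1,0,1) = mmul (mmul h (1,i,0,1)) (1,1,0,1)"
    by (simp add: mmul_assoc add.commute)
  with T step1 SL2Z_mmul[OF _ SL2Z_T] show ?case by simp
next
  case (step2 i)
  have "mmul h (1,i-1,0,1) = mmul (mmul h (1,i,0,1)) (1,-1,0,1)"
    by (simp add: mmul_assoc add.commute)
  with T_inv step2 SL2Z_mmul[OF _ SL2Z_T] show ?case by simp
qed

lemma right_closed_upper_triangular: "(a,b,0,d) \<in> SL2Z \<Longrightarrow> Q (a,b,0,d)"
proof -
  assume "(a,b,0,d) \<in> SL2Z"
  then have "(a = 1 \<and> d = 1) \<or> (a = -1 \<and> d = -1)" by (simp add: SL2Z_def zmult_eq_1_iff)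
  moreover have "Q (mmul mone (1,b,0,1))" by (rule right_mult_T_pow[OF SL2Z_mone one])
  moreover have "Q (mmul (-1,0,0,-1) (1,-b,0,1))"
  proof (rule right_mult_T_pow)
    have "Q (mmul (mmul mone (0,1,-1,0)) (0,1,-1,0))"
      by (intro S_inv one SL2Z_mone SL2Z_mmul) (simp add: SL2Z_def)
    then show "Q (-1,0,0,-1)" by (simp add: mone_def)
  qed (simp add: SL2Z_def)
  ultimately show ?thesis by (auto simp: mone_def)
qed

text \<open>One step of the Euclidean algorithm on the bottom row.\<close>

lemma SL2Z_euclid_step:
  "mmul (mmul (b - a*q, -a, r, -c) (0,1,-1,0)) (1,q,0,1) = (a, b, c, q*c + r)"
  by (simp add: algebra_simps)

lemma SL2Z_right_induct: "g \<in> SL2Z \<Longrightarrow> Q g"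
proof -
  have "Q (a,b,c,d)" if "(a,b,c,d) \<in> SL2Z" for a b c d
    using that
  proof (induction "nat \<bar>c\<bar>" arbitrary: a b c d rule: less_induct)
    case less
    show ?case
    proof (cases "c = 0")
      case True
      with less.prems right_closed_upper_triangular show ?thesis by blast
    next
      case False
      define q r where "q = d div c" and "r = d mod c"
      have d: "d = q*c + r" by (simp add: q_def r_def)
      let ?h = "(b - a*q, -a, r, -c)"
      have "(b - a*q) * (-c) - (-a) * r = a*d - b*c" by (simp add: d algebra_simps)
      with less.prems have hS: "?h \<in> SL2Z" by (simp add: SL2Z_def)
      have "Q ?h"
        using less.hyps[OF _ hS] abs_mod_less[OF False] False by (simp add: r_def)
      then have "Q (mmul ?h (0,1,-1,0))" by (rule S_inv[OF hS])
      then have "Q (mmul (mmul ?h (0,1,-1,0)) (1,q,0,1))"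
        by (intro right_mult_T_pow SL2Z_mmul[OF hS]) (simp add: SL2Z_def)
      then show ?thesis by (simp only: SL2Z_euclid_step d)
    qed
  qed
  then show "g \<in> SL2Z \<Longrightarrow> Q g" by (cases g) simp
qed

end

definition coset_reps :: "(mat2 \<Rightarrow> bool) \<Rightarrow> mat2 list \<Rightarrow> bool" where
  "coset_reps P R \<longleftrightarrow> set R \<subseteq> SL2Z \<and> (\<forall>g\<in>SL2Z. \<exists>r\<in>set R. P (red 9 (mmul g (minv r))))"

text \<open>An executable certificate for \<open>coset_reps\<close>: since \<open>T\<close> and \<open>S\<close> generate \<open>SL\<^sub>2(\<int>)\<close>,
  it suffices that right multiplication by \<open>T\<^sup>\<plusminus>\<^sup>1\<close> and \<open>S\<^sup>-\<^sup>1\<close> maps the cosets of \<open>R\<close> into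
  themselves and that \<open>R\<close> meets the trivial coset.\<close>

definition coset_reps_cert :: "(mat2 \<Rightarrow> bool) \<Rightarrow> mat2 list \<Rightarrow> bool" where
  "coset_reps_cert P R \<longleftrightarrow> list_all (\<lambda>r. mdet r = 1) R \<and> list_ex (\<lambda>r. P (red 9 (minv r))) R
     \<and> list_all (\<lambda>X. list_all (\<lambda>r. list_ex (\<lambda>r'. P (red 9 (mmul (mmul r X) (minv r')))) R) R)
         [(1,1,0,1), (1,-1,0,1), (0,1,-1,0)]"

lemma coset_repsI:
  assumes P: "mod9_subgroup P" and cert: "coset_reps_cert P R"
  shows "coset_reps P R"
proof -
  have RS: "set R \<subseteq> SL2Z"
    using cert by (auto simp: coset_reps_cert_def list_all_iff SL2Z_iff_mdet)
  let ?Q = "\<lambda>g. \<exists>r\<in>set R. P (red 9 (mmul g (minv r)))"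
  have step: "?Q (mmul h X)"
    if X: "X \<in> {(1,1,0,1), (1,-1,0,1), (0,1,-1,0)}" and "?Q h" for h X
  proof -
    obtain r where r: "r \<in> set R" "P (red 9 (mmul h (minv r)))" using \<open>?Q h\<close> by blast
    obtain r' where r': "r' \<in> set R" "P (red 9 (mmul (mmul r X) (minv r')))"
      using cert r(1) X by (auto simp: coset_reps_cert_def list_all_iff list_ex_iff)
    have "mmul (mmul h X) (minv r') = mmul (mmul h (minv r)) (mmul (mmul r X) (minv r'))"
      using r(1) RS by (auto simp: mmul_assoc mmul_minv_cancel_left)
    then have "red 9 (mmul (mmul h X) (minv r'))
      = red 9 (mmul (red 9 (mmul h (minv r))) (red 9 (mmul (mmul r X) (minv r'))))"
      by (simp add: red_mmul_left red_mmul_right)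
    with r(2) r'(2) P have "P (red 9 (mmul (mmul h X) (minv r')))"
      unfolding mod9_subgroup_def by metis
    with r'(1) show ?thesis by blast
  qed
  have "?Q mone" using cert by (simp add: coset_reps_cert_def list_ex_iff)
  then have "?Q g" if "g \<in> SL2Z" for g
    by (rule SL2Z_right_induct[OF _ _ _ _ that]) (auto intro: step)
  with RS show ?thesis by (simp add: coset_reps_def)
qed


section \<open>Fibres\<close>

locale level9_cover =
  fixes H G :: "mat2 \<Rightarrow> bool" and R :: "mat2 list"
  assumes subgroup_H: "mod9_subgroup H" and subgroup_G: "mod9_subgroup G"
    and H_le_G: "H \<le> G" and coset_reps_H: "coset_reps H R"

text \<open>The points \<open>act x t\<close> for \<open>x \<in> X\<close> make up the fibre of \<open>X\<^sub>H \<rightarrow> X\<^sub>G\<close> above \<open>act g0 t\<close>: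
  they lie above it, every coset representative in \<open>R\<close> lying above it is identified with one
  of them, and they are pairwise distinct.\<close>

definition fiber_cert ::
  "(mat2 \<Rightarrow> bool) \<Rightarrow> (mat2 \<Rightarrow> bool) \<Rightarrow> mat2 list \<Rightarrow> mat2 list \<Rightarrow> mat2 \<Rightarrow> mat2 list \<Rightarrow> bool"
where
  "fiber_cert H G SW R g0 X \<longleftrightarrow>
     list_all (\<lambda>x. mdet x = 1 \<and> G (red 9 (mmul x (minv g0)))) X
     \<and> list_all (\<lambda>r. G (red 9 (mmul r (minv g0))) \<longrightarrow>
         list_ex (\<lambda>x. list_ex (\<lambda>s. H (red 9 (mmul (mmul x s) (minv r)))) SW) X) R
     \<and> distinct X
     \<and> list_all (\<lambda>x. list_all (\<lambda>y. x \<noteq> y \<longrightarrow>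
         list_all (\<lambda>s. \<not> H (red 9 (mmul (mmul y s) (minv x)))) SW) X) X"

context level9_cover
begin

lemma coset_decomp:
  assumes "g \<in> SL2Z"
  obtains \<gamma> r where "\<gamma> \<in> Gamma9 H" "r \<in> set R" "r \<in> SL2Z" "g = mmul \<gamma> r"
proof -
  obtain r where r: "r \<in> set R" "H (red 9 (mmul g (minv r)))"
    using coset_reps_H assms by (auto simp: coset_reps_def)
  have rS: "r \<in> SL2Z" using r(1) coset_reps_H by (auto simp: coset_reps_def)
  have "mmul g (minv r) \<in> Gamma9 H"
    using r(2) by (simp add: Gamma9_def SL2Z_mmul SL2Z_minv assms rS)
  moreover have "g = mmul (mmul g (minv r)) r"
    by (simp add: mmul_assoc mmul_minv_left rS)
  ultimately show ?thesis using that r(1) rS by blast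
qed

lemma orb_mem_fiber_cert_image:
  assumes SW: "stab_reps t SW" and g0: "g0 \<in> SL2Z" and cert: "fiber_cert H G SW R g0 X"
    and y: "y \<in> Gamma9 G"
  shows "orb (Gamma9 H) (act (mmul y g0) t) \<in> (\<lambda>x. orb (Gamma9 H) (act x t)) ` set X"
proof -
  have t: "base_point t" using SW by (simp add: stab_reps_def)
  have yS: "y \<in> SL2Z" using y Gamma9_subset_SL2Z by blast
  obtain \<gamma> r where \<gamma>: "\<gamma> \<in> Gamma9 H" and r: "r \<in> set R" "r \<in> SL2Z" and g: "mmul y g0 = mmul \<gamma> r"
    using coset_decomp[OF SL2Z_mmul[OF yS g0]] by blast
  have \<gamma>S: "\<gamma> \<in> SL2Z" using \<gamma> Gamma9_subset_SL2Z by blast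
  have "r = mmul (minv \<gamma>) (mmul y g0)" by (simp add: g mmul_minv_cancel_left \<gamma>S)
  then have "mmul r (minv g0) = mmul (minv \<gamma>) y" by (simp add: mmul_assoc mmul_minv_right g0)
  moreover have "mmul (minv \<gamma>) y \<in> Gamma9 G"
    using Gamma9_mmul[OF subgroup_G _ y] Gamma9_minv[OF subgroup_H \<gamma>] Gamma9_mono[OF H_le_G] by blast
  ultimately have "G (red 9 (mmul r (minv g0)))" by (simp add: Gamma9_def)
  then obtain x s where x: "x \<in> set X" "x \<in> SL2Z" "s \<in> set SW" "H (red 9 (mmul (mmul x s) (minv r)))"
    using cert r(1) by (auto simp: fiber_cert_def list_all_iff list_ex_iff SL2Z_iff_mdet)
  have "orb (Gamma9 H) (act (mmul \<gamma> r) t) = orb (Gamma9 H) (act r t)"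
    by (rule orb_act_mmul[OF t subgroup_H \<gamma> r(2)])
  also have "\<dots> = orb (Gamma9 H) (act x t)"
    using orb_act_eq_iff_mod9[OF SW subgroup_H r(2) x(2)] x by blast
  finally show ?thesis using g x(1) by auto
qed

lemma fiber_eq:
  assumes SW: "stab_reps t SW" and g0: "g0 \<in> SL2Z" and cert: "fiber_cert H G SW R g0 X"
  shows "fiber (Gamma9 H) (Gamma9 G) (act g0 t) = (\<lambda>x. orb (Gamma9 H) (act x t)) ` set X"
proof -
  have t: "base_point t" using SW by (simp add: stab_reps_def)
  have XS: "set X \<subseteq> SL2Z" using cert by (auto simp: fiber_cert_def list_all_iff SL2Z_iff_mdet)
  have fiber: "fiber (Gamma9 H) (Gamma9 G) (act g0 t)
      = {orb (Gamma9 H) (act (mmul y g0) t) | y. y \<in> Gamma9 G}"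
    unfolding fiber_def orb_act[OF t Gamma9_subset_SL2Z g0] by blast
  have "orb (Gamma9 H) (act x t) \<in> fiber (Gamma9 H) (Gamma9 G) (act g0 t)" if "x \<in> set X" for x
    using act_mem_orb[OF t g0, of x G] cert that XS unfolding fiber_def
    by (auto simp: fiber_cert_def list_all_iff)
  with orb_mem_fiber_cert_image[OF SW g0 cert] show ?thesis unfolding fiber by blast
qed

lemma card_fiber:
  assumes SW: "stab_reps t SW" and g0: "g0 \<in> SL2Z" and cert: "fiber_cert H G SW R g0 X"
  shows "card (fiber (Gamma9 H) (Gamma9 G) (act g0 t)) = length X"
proof -
  have XS: "set X \<subseteq> SL2Z" using cert by (auto simp: fiber_cert_def list_all_iff SL2Z_iff_mdet)
  have "inj_on (\<lambda>x. orb (Gamma9 H) (act x t)) (set X)"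
  proof (rule inj_onI, rule ccontr)
    fix x y assume xy: "x \<in> set X" "y \<in> set X" "x \<noteq> y"
      and "orb (Gamma9 H) (act x t) = orb (Gamma9 H) (act y t)"
    then have "\<exists>s\<in>set SW. H (red 9 (mmul (mmul y s) (minv x)))"
      using orb_act_eq_iff_mod9[OF SW subgroup_H, of x y] XS by blast
    with cert xy show False by (auto simp: fiber_cert_def list_all_iff)
  qed
  with cert show ?thesis
    by (simp add: fiber_eq[OF SW g0 cert] card_image distinct_card fiber_cert_def)
qed

lemma fiber_i_translates:
  assumes "fiber_cert H G stab_i R (1,k,0,1) (map (\<lambda>j. (1,j,0,1)) js)"
  shows "fiber (Gamma9 H) (Gamma9 G) (pti k) = (\<lambda>j. orb (Gamma9 H) (pti j)) ` set js
    \<and> card ((\<lambda>j. orb (Gamma9 H) (pti j)) ` set js) = length js"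
  using fiber_eq[OF stab_reps_i SL2Z_T assms] card_fiber[OF stab_reps_i SL2Z_T assms]
  by (simp add: act_T_i image_image)

end


section \<open>Ramification indices\<close>

lemma mconj_mmul: "g \<in> SL2Z \<Longrightarrow> mmul (mconj g s) (mconj g u) = mconj g (mmul s u)"
  unfolding mconj_def by (simp add: mmul_assoc mmul_minv_cancel_left)

lemma mconj_mconj: "mconj (mmul a b) s = mconj a (mconj b s)"
  unfolding mconj_def by (simp add: minv_mmul mmul_assoc)

lemma SL2Z_mconj: "g \<in> SL2Z \<Longrightarrow> s \<in> SL2Z \<Longrightarrow> mconj g s \<in> SL2Z"
  unfolding mconj_def by (intro SL2Z_mmul SL2Z_minv)

lemma inj_mconj: "g \<in> SL2Z \<Longrightarrow> inj (mconj g)"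
proof (rule injI)
  fix s u assume g: "g \<in> SL2Z" and "mconj g s = mconj g u"
  then have "mmul (minv g) (mmul (mconj g s) g) = mmul (minv g) (mmul (mconj g u) g)" by simp
  with g show "s = u" by (simp add: mconj_def mmul_assoc mmul_minv_left mmul_minv_cancel_left)
qed

definition conj_stab :: "(mat2 \<Rightarrow> bool) \<Rightarrow> hpt \<Rightarrow> mat2 \<Rightarrow> mat2 set" where
  "conj_stab P t g = {s \<in> stab SL2Z t. P (red 9 (mconj g s))}"

lemma stab_Gamma9_act:
  assumes t: "base_point t" and g: "g \<in> SL2Z"
  shows "stab (Gamma9 P) (act g t) = mconj g ` conj_stab P t g"
proof (intro equalityI subsetI)
  fix h assume "h \<in> stab (Gamma9 P) (act g t)"
  then have h: "h \<in> Gamma9 P" "act h (act g t) = act g t" by (auto simp: stab_def)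
  have hS: "h \<in> SL2Z" using h(1) by (simp add: Gamma9_def)
  have "act (mmul h g) t = act g t" using h(2) act_mmul[OF t hS g] by simp
  then have "mmul (minv g) (mmul h g) \<in> stab SL2Z t"
    using act_eq_iff_stab[OF t SL2Z_mmul[OF hS g] g] by simp
  moreover have hc: "h = mconj g (mmul (minv g) (mmul h g))"
    using g by (simp add: mconj_def mmul_assoc mmul_minv_right mmul_minv_cancel_right)
  ultimately show "h \<in> mconj g ` conj_stab P t g"
    using h(1) by (auto simp: conj_stab_def Gamma9_def)
next
  fix h assume "h \<in> mconj g ` conj_stab P t g"
  then obtain s where s: "s \<in> stab SL2Z t" "P (red 9 (mconj g s))" "h = mconj g s"
    by (auto simp: conj_stab_def)
  have sS: "s \<in> SL2Z" using s(1) by (simp add: stab_def)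
  have hS: "h \<in> SL2Z" using s(3) SL2Z_mconj[OF g sS] by simp
  have "mmul h g = mmul g s"
    using s(3) g by (simp add: mconj_def mmul_assoc mmul_minv_left)
  then have "act h (act g t) = act g (act s t)" using act_mmul[OF t hS g] act_mmul[OF t g sS] by simp
  with s(1) have "act h (act g t) = act g t" by (simp add: stab_def)
  with hS s show "h \<in> stab (Gamma9 P) (act g t)" by (simp add: stab_def Gamma9_def)
qed

lemma pm_stab_Gamma9:
  assumes t: "base_point t" and P: "mod9_subgroup P" and g: "g \<in> SL2Z"
  shows "pm (stab (Gamma9 P) (act g t)) = stab (Gamma9 P) (act g t)"
proof -
  have "mneg h \<in> stab (Gamma9 P) (act g t)" if "h \<in> stab (Gamma9 P) (act g t)" for h
  proof -
    have h: "h \<in> Gamma9 P" "act h (act g t) = act g t" using that by (auto simp: stab_def)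
    have hS: "h \<in> SL2Z" "mneg h \<in> SL2Z"
      using Gamma9_mneg[OF P h(1)] h(1) Gamma9_subset_SL2Z by blast+
    have "act (mneg h) (act g t) = act (mneg (mmul h g)) t"
      using act_mmul[OF t hS(2) g] by (cases h; cases g) simp
    also have "\<dots> = act h (act g t)" by (simp add: act_mneg[OF t] act_mmul[OF t hS(1) g])
    finally show ?thesis using h Gamma9_mneg[OF P h(1)] by (simp add: stab_def)
  qed
  then show ?thesis unfolding pm_def by blast
qed

lemma card_cosets_mconj:
  assumes "g \<in> SL2Z"
  shows "card ((\<lambda>h. mmul h ` (mconj g ` K)) ` (mconj g ` L)) = card ((\<lambda>s. mmul s ` K) ` L)"
proof -
  have "mmul (mconj g s) ` mconj g ` K = mconj g ` (mmul s ` K)" for s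
    by (simp add: image_image mconj_mmul[OF assms])
  then have "(\<lambda>h. mmul h ` (mconj g ` K)) ` (mconj g ` L) = (\<lambda>X. mconj g ` X) ` ((\<lambda>s. mmul s ` K) ` L)"
    by (simp add: image_image)
  moreover have "inj_on (\<lambda>X. mconj g ` X) ((\<lambda>s. mmul s ` K) ` L)"
    by (rule inj_onI) (simp add: inj_image_eq_iff[OF inj_mconj[OF assms]])
  ultimately show ?thesis by (simp add: card_image)
qed

context
  fixes P t g
  assumes t: "base_point t" and P: "mod9_subgroup P" and g: "g \<in> SL2Z"
begin

lemma conj_stab_subset: "conj_stab P t g \<subseteq> stab SL2Z t"
  by (auto simp: conj_stab_def)

lemma conj_stab_mone: "mone \<in> conj_stab P t g"
  using P by (simp add: conj_stab_def mconj_def stab_SL2Z_mone[OF t] mmul_minv_right[OF g])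
    (simp add: mone_def mod9_subgroup_def)

lemma conj_stab_mmul: "s \<in> conj_stab P t g \<Longrightarrow> u \<in> conj_stab P t g \<Longrightarrow> mmul s u \<in> conj_stab P t g"
  using Gamma9_mmul[OF P, of "mconj g s" "mconj g u"] stab_SL2Z_mmul[OF t, of s u]
  by (auto simp: conj_stab_def Gamma9_def mconj_mmul[OF g] SL2Z_mconj[OF g] stab_def)

lemma conj_stab_minv: "s \<in> conj_stab P t g \<Longrightarrow> minv s \<in> conj_stab P t g"
proof -
  assume s: "s \<in> conj_stab P t g"
  then have "s \<in> stab SL2Z t" "mconj g s \<in> Gamma9 P"
    by (auto simp: conj_stab_def Gamma9_def stab_def SL2Z_mconj[OF g])
  moreover have "mconj g (minv s) = minv (mconj g s)"
    by (simp add: mconj_def minv_mmul mmul_assoc)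
  ultimately show ?thesis
    using Gamma9_minv[OF P] stab_SL2Z_minv[OF t] by (auto simp: conj_stab_def Gamma9_def)
qed

lemma conj_stab_red_saturated:
  "s \<in> stab SL2Z t \<Longrightarrow> u \<in> conj_stab P t g \<Longrightarrow> red 9 s = red 9 u \<Longrightarrow> s \<in> conj_stab P t g"
  unfolding conj_stab_def mconj_def by (metis (no_types, lifting) mem_Collect_eq red_mmul_cong)

lemma mmul_image_conj_stab: "k \<in> conj_stab P t g \<Longrightarrow> mmul k ` conj_stab P t g = conj_stab P t g"
proof (intro equalityI subsetI)
  fix x assume k: "k \<in> conj_stab P t g" and x: "x \<in> conj_stab P t g"
  have "k \<in> SL2Z" using k by (auto simp: conj_stab_def stab_def)
  then have "x = mmul k (mmul (minv k) x)" by (simp add: mmul_minv_cancel_right)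
  with conj_stab_mmul[OF conj_stab_minv[OF k] x] show "x \<in> mmul k ` conj_stab P t g" by blast
qed (auto intro: conj_stab_mmul)

text \<open>The cosets can be counted modulo 9 because membership in \<open>conj_stab\<close> only depends on
  the residue modulo 9.\<close>

lemma card_cosets_red:
  assumes L: "L \<subseteq> stab SL2Z t"
  shows "card ((\<lambda>s. mmul s ` conj_stab P t g) ` L)
    = card ((\<lambda>m. (\<lambda>k. red 9 (mmul m k)) ` (red 9 ` conj_stab P t g)) ` (red 9 ` L))"
proof -
  let ?K = "conj_stab P t g"
  have "(\<lambda>m. (\<lambda>k. red 9 (mmul m k)) ` (red 9 ` ?K)) ` (red 9 ` L)
      = (\<lambda>X. red 9 ` X) ` ((\<lambda>s. mmul s ` ?K) ` L)"
    by (simp add: image_image red_mmul_left red_mmul_right)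
  moreover have "inj_on (\<lambda>X. red 9 ` X) ((\<lambda>s. mmul s ` ?K) ` L)"
  proof (rule inj_onI)
    fix X Y assume "X \<in> (\<lambda>s. mmul s ` ?K) ` L" "Y \<in> (\<lambda>s. mmul s ` ?K) ` L"
      and eq: "red 9 ` X = red 9 ` Y"
    then obtain s u where s: "s \<in> L" "X = mmul s ` ?K" and u: "u \<in> L" "Y = mmul u ` ?K" by blast
    have "red 9 s \<in> red 9 ` Y"
      unfolding eq[symmetric] s(2) using conj_stab_mone by (metis image_eqI mmul_mone(2))
    then obtain k where k: "k \<in> ?K" "red 9 s = red 9 (mmul u k)" using u(2) by auto
    have uk: "mmul u k \<in> stab SL2Z t" "mmul u k \<in> SL2Z"
      using stab_SL2Z_mmul[OF t, of u k] u(1) k(1) L conj_stab_subset by (auto simp: stab_def)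
    define v where "v = mmul (minv (mmul u k)) s"
    have "red 9 v = red 9 (mmul (minv (mmul u k)) (mmul u k))"
      by (metis k(2) red_mmul_right v_def)
    then have "red 9 v = red 9 mone" by (simp add: mmul_minv_left[OF uk(2)])
    moreover have "v \<in> stab SL2Z t"
      unfolding v_def using stab_SL2Z_mmul[OF t stab_SL2Z_minv[OF t uk(1)]] s(1) L by blast
    ultimately have v: "v \<in> ?K" using conj_stab_red_saturated conj_stab_mone by blast
    have "s = mmul u (mmul k v)"
      by (simp add: v_def mmul_assoc[symmetric] mmul_minv_right[OF uk(2)])
    then have "X = mmul u ` (mmul (mmul k v) ` ?K)" by (simp add: s(2) image_image mmul_assoc)
    then show "X = Y" by (simp add: u(2) mmul_image_conj_stab conj_stab_mmul[OF k(1) v])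
  qed
  ultimately show ?thesis by (simp add: card_image)
qed

end

definition stab_mod9 :: "(mat2 \<Rightarrow> bool) \<Rightarrow> mat2 list \<Rightarrow> mat2 \<Rightarrow> mat2 set" where
  "stab_mod9 P SW g = red 9 ` set (filter (\<lambda>w. P (red 9 (mconj g w))) SW)"

definition ram_mod9 :: "(mat2 \<Rightarrow> bool) \<Rightarrow> (mat2 \<Rightarrow> bool) \<Rightarrow> mat2 list \<Rightarrow> mat2 \<Rightarrow> nat" where
  "ram_mod9 H G SW g = card ((\<lambda>m. (\<lambda>k. red 9 (mmul m k)) ` stab_mod9 H SW g) ` stab_mod9 G SW g)"

lemma red_conj_stab:
  assumes SW: "stab_reps t SW"
  shows "red 9 ` conj_stab P t g = stab_mod9 P SW g"
proof -
  have "red 9 s \<in> stab_mod9 P SW g" if "s \<in> stab SL2Z t" "P (red 9 (mconj g s))" for s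
  proof -
    have "red 9 s \<in> red 9 ` set SW" using SW that(1) unfolding stab_reps_def by blast
    then obtain w where w: "w \<in> set SW" "red 9 w = red 9 s" by (elim imageE) simp
    with that(2) red_mmul_cong[of 9 w s g "minv g"]
    have "w \<in> set (filter (\<lambda>w. P (red 9 (mconj g w))) SW)" by (simp add: mconj_def)
    with w(2) show ?thesis unfolding stab_mod9_def by (metis image_eqI)
  qed
  moreover have "set SW \<subseteq> stab SL2Z t" using SW by (simp add: stab_reps_def)
  ultimately show ?thesis by (auto simp: stab_mod9_def conj_stab_def)
qed

lemma ram_eq_ram_mod9:
  assumes SW: "stab_reps t SW" and H: "mod9_subgroup H" and G: "mod9_subgroup G" and g: "g \<in> SL2Z"
  shows "ram (Gamma9 H) (Gamma9 G) (act g t) = ram_mod9 H G SW g"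
proof -
  have t: "base_point t" using SW by (simp add: stab_reps_def)
  have "ram (Gamma9 H) (Gamma9 G) (act g t) = card ((\<lambda>s. mmul s ` conj_stab H t g) ` conj_stab G t g)"
    unfolding ram_def pm_stab_Gamma9[OF t H g] pm_stab_Gamma9[OF t G g]
    unfolding stab_Gamma9_act[OF t g] card_cosets_mconj[OF g] ..
  also have "\<dots> = ram_mod9 H G SW g"
    unfolding card_cosets_red[OF t H g conj_stab_subset[OF t G g]] ram_mod9_def red_conj_stab[OF SW] ..
  finally show ?thesis .
qed

lemma stab_mod9_mmul_Gamma9:
  assumes SW: "stab_reps t SW" and P: "mod9_subgroup P" and \<gamma>: "\<gamma> \<in> Gamma9 P" and r: "r \<in> SL2Z"
  shows "stab_mod9 P SW (mmul \<gamma> r) = stab_mod9 P SW r"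
proof -
  have "P (red 9 (mconj (mmul \<gamma> r) w)) \<longleftrightarrow> P (red 9 (mconj r w))" if "w \<in> set SW" for w
  proof -
    have "w \<in> SL2Z" using SW that by (auto simp: stab_reps_def stab_def)
    then have "mconj r w \<in> SL2Z" using SL2Z_mconj[OF r] by blast
    with Gamma9_mconj_iff[OF P \<gamma>] \<gamma> show ?thesis
      by (simp add: mconj_mconj Gamma9_def SL2Z_mconj Gamma9_subset_SL2Z)
  qed
  then show ?thesis unfolding stab_mod9_def by (metis (no_types, lifting) filter_cong)
qed

lemma ram_act_mmul_Gamma9:
  assumes SW: "stab_reps t SW" and H: "mod9_subgroup H" and K: "mod9_subgroup K" "H \<le> K"
    and \<delta>: "\<delta> \<in> Gamma9 H" and x: "x \<in> SL2Z"
  shows "ram (Gamma9 H) (Gamma9 K) (act (mmul \<delta> x) t) = ram (Gamma9 H) (Gamma9 K) (act x t)"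
proof -
  have "\<delta> \<in> SL2Z" "\<delta> \<in> Gamma9 K" using \<delta> Gamma9_subset_SL2Z Gamma9_mono[OF K(2)] by blast+
  then show ?thesis
    by (simp add: ram_eq_ram_mod9[OF SW H K(1)] SL2Z_mmul x ram_mod9_def
        stab_mod9_mmul_Gamma9[OF SW H \<delta> x] stab_mod9_mmul_Gamma9[OF SW K(1) _ x])
qed

text \<open>By the previous lemma, above a point of \<open>X\<^sub>G\<close> it suffices to evaluate the ramification
  at the representatives of a fibre certificate.\<close>

lemma (in level9_cover) ram_on_orbit:
  assumes SW: "stab_reps t SW" and g0: "g0 \<in> SL2Z" and cert: "fiber_cert H G SW R g0 X"
    and K: "mod9_subgroup K" "H \<le> K" and vals: "list_all (\<lambda>x. ram_mod9 H K SW x = e) X"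
  shows "\<forall>z\<in>orb (Gamma9 G) (act g0 t). ram (Gamma9 H) (Gamma9 K) z = e"
proof
  have t: "base_point t" using SW by (simp add: stab_reps_def)
  fix z assume "z \<in> orb (Gamma9 G) (act g0 t)"
  then obtain y where y: "y \<in> Gamma9 G" "z = act (mmul y g0) t"
    using orb_act[OF t Gamma9_subset_SL2Z g0] by blast
  have gS: "mmul y g0 \<in> SL2Z" using y(1) Gamma9_subset_SL2Z SL2Z_mmul g0 by blast
  obtain x where x: "x \<in> set X" "orb (Gamma9 H) (act (mmul y g0) t) = orb (Gamma9 H) (act x t)"
    using orb_mem_fiber_cert_image[OF SW g0 cert y(1)] by blast
  have xS: "x \<in> SL2Z" using x(1) cert by (auto simp: fiber_cert_def list_all_iff SL2Z_iff_mdet)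
  obtain \<delta> where \<delta>: "\<delta> \<in> Gamma9 H" "z = act (mmul \<delta> x) t"
    using x(2) y(2) orb_act_eq_iff_mem[OF t subgroup_H gS xS] orb_act[OF t Gamma9_subset_SL2Z xS] by auto
  have "ram_mod9 H K SW x = e" using vals x(1) by (simp add: list_all_iff)
  then show "ram (Gamma9 H) (Gamma9 K) z = e"
    by (simp add: \<delta>(2) ram_act_mmul_Gamma9[OF SW subgroup_H K \<delta>(1) xS] ram_eq_ram_mod9[OF SW subgroup_H K(1) xS])
qed


fun gen_bfs :: "nat \<Rightarrow> mat2 list \<Rightarrow> mat2 list \<Rightarrow> mat2 list \<Rightarrow> mat2 list" where
  "gen_bfs 0 S seen frontier = seen"
| "gen_bfs (Suc k) S seen frontier =
     (let new = remdups (filter (\<lambda>m. m \<notin> set seen) [red 9 (mmul s g). s \<leftarrow> S, g \<leftarrow> frontier])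
      in gen_bfs k S (seen @ new) new)"

lemma gen_bfs_subset:
  "set seen \<subseteq> gen 9 (set S) \<Longrightarrow> set frontier \<subseteq> set seen \<Longrightarrow> set (gen_bfs k S seen frontier) \<subseteq> gen 9 (set S)"
proof (induction k arbitrary: seen frontier)
  case (Suc k)
  let ?new = "remdups (filter (\<lambda>m. m \<notin> set seen) [red 9 (mmul s g). s \<leftarrow> S, g \<leftarrow> frontier])"
  have "red 9 (mmul s g) \<in> gen 9 (set S)" if "s \<in> set S" "g \<in> set frontier" for s g
    using that Suc.prems by (blast intro: gen.gen_mul)
  then have "set ?new \<subseteq> gen 9 (set S)" by auto
  with Suc.prems have "set (gen_bfs k S (seen @ ?new) ?new) \<subseteq> gen 9 (set S)"
    by (intro Suc.IH) auto
  then show ?case by (simp add: Let_def)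
qed simp

lemma gen_subset_of_closed:
  assumes "red 9 mone \<in> L" "\<forall>s\<in>S. \<forall>g\<in>L. red 9 (mmul s g) \<in> L"
  shows "gen 9 S \<subseteq> L"
proof
  fix x assume "x \<in> gen 9 S"
  then show "x \<in> L" by (induction rule: gen.induct) (use assms in auto)
qed

definition gen_cert :: "mat2 list \<Rightarrow> mat2 list \<Rightarrow> nat \<Rightarrow> bool" where
  "gen_cert S L k \<longleftrightarrow> (1,0,0,1) \<in> set L
     \<and> list_all (\<lambda>s. list_all (\<lambda>g. red 9 (mmul s g) \<in> set L) L) S
     \<and> set L \<subseteq> set (gen_bfs k S [(1,0,0,1)] [(1,0,0,1)])"

lemma gen_eq_of_cert:
  assumes "gen_cert S L k"
  shows "gen 9 (set S) = set L"
proof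
  show "gen 9 (set S) \<subseteq> set L"
    using assms by (intro gen_subset_of_closed) (auto simp: gen_cert_def list_all_iff mone_def)
  have "red 9 mone \<in> gen 9 (set S)" by (rule gen.gen_one)
  then have "set (gen_bfs k S [(1,0,0,1)] [(1,0,0,1)]) \<subseteq> gen 9 (set S)"
    by (intro gen_bfs_subset) (simp_all add: mone_def)
  with assms show "set L \<subseteq> gen 9 (set S)" by (auto simp: gen_cert_def)
qed

lemma gen_red: "x \<in> gen n S \<Longrightarrow> red n x = x"
  by (induction rule: gen.induct) simp_all

lemma gen_mult: "g \<in> gen n S \<Longrightarrow> h \<in> gen n S \<Longrightarrow> red n (mmul g h) \<in> gen n S"
proof (induction rule: gen.induct)
  case gen_one
  then show ?case by (simp add: red_mmul_left gen_red)
next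
  case (gen_mul s g)
  have "red n (mmul (red n (mmul s g)) h) = red n (mmul s (red n (mmul g h)))"
    by (simp add: red_mmul_left red_mmul_right mmul_assoc)
  then show ?case using gen.gen_mul[OF gen_mul(1) gen_mul(3)[OF gen_mul(4)]] by simp
qed

definition C9_list :: "mat2 list" where
  "C9_list = [
    (1,0,0,1), (0,8,1,0), (8,5,5,1), (1,6,3,1), (8,0,0,8), (5,1,1,4), (6,8,1,6), (4,8,8,5),
    (2,2,2,7), (5,8,8,4), (1,3,6,1), (0,1,8,0), (1,4,4,8), (8,3,6,8), (2,7,7,7), (8,4,4,1),
    (3,8,1,3), (7,2,2,2), (8,6,3,8), (1,5,5,8), (3,1,8,3), (7,7,7,2), (4,1,1,5), (6,1,8,6)]"

definition B_list :: "mat2 list" where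
  "B_list = [
    (1,0,0,1), (0,8,1,0), (8,5,5,1), (1,6,3,1), (7,3,3,4), (8,0,0,8), (5,1,1,4), (6,8,1,6),
    (3,2,4,6), (4,8,8,5), (2,2,2,7), (8,2,8,1), (5,8,8,4), (1,3,6,1), (7,0,6,4), (6,5,7,3),
    (8,8,2,1), (4,6,6,7), (0,1,8,0), (1,4,4,8), (8,3,6,8), (2,6,6,5), (2,7,7,7), (2,1,1,1),
    (8,4,4,1), (3,8,1,3), (0,2,4,3), (5,3,3,2), (8,1,1,7), (7,2,2,2), (7,8,8,8), (8,6,3,8),
    (2,8,5,7), (1,8,8,2), (1,5,5,8), (5,5,2,4), (7,6,0,4), (3,5,7,0), (5,2,5,4), (4,3,0,7),
    (2,5,8,7), (3,1,8,3), (6,7,5,3), (7,7,7,2), (1,7,1,8), (4,1,1,5), (2,0,3,5), (3,4,2,6),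
    (1,1,7,8), (6,1,8,6), (8,7,7,4), (5,4,4,7), (6,2,4,0), (5,6,0,2), (2,4,4,4), (5,7,7,1),
    (1,2,2,5), (2,3,0,5), (4,2,2,8), (5,0,6,2), (4,5,5,2), (7,5,5,5), (0,5,7,6), (4,0,3,7),
    (0,7,5,6), (7,1,4,2), (4,4,7,5), (6,4,2,0), (4,7,4,5), (7,4,1,2), (3,7,5,0), (0,4,2,3)]"

definition C3_list :: "mat2 list" where
  "C3_list = [
    (0,1,2,0), (0,2,1,0), (1,0,0,1), (1,1,1,2), (1,2,2,2), (2,0,0,2), (2,1,1,1), (2,2,2,1)]"

lemma C9_eq: "C9 = set C9_list"
proof -
  have "gen_cert [(0,-1,1,0), (-1,-4,-4,1), (1,-3,3,1)] C9_list 10"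
    by code_simp
  from gen_eq_of_cert[OF this] show ?thesis by (simp add: C9_def)
qed

lemma B_eq: "Bgrp = set B_list"
proof -
  have "gen_cert [(0,-1,1,0), (-1,-4,-4,1), (1,-3,3,1), (-2,3,3,4)] B_list 10"
    by code_simp
  from gen_eq_of_cert[OF this] show ?thesis by (simp add: Bgrp_def)
qed


definition in_C9 :: "mat2 \<Rightarrow> bool" where "in_C9 m \<longleftrightarrow> m \<in> set C9_list"
definition in_B :: "mat2 \<Rightarrow> bool" where "in_B m \<longleftrightarrow> m \<in> set B_list"
definition in_C3 :: "mat2 \<Rightarrow> bool" where "in_C3 m \<longleftrightarrow> red 3 m \<in> set C3_list"

lemma C3_eq: "C3 = set C3_list"
proof -
  have "set (map (red 3) C9_list) = set C3_list" by code_simp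
  then show ?thesis by (simp add: C3_def C9_eq)
qed

lemma Gamma_C9_eq: "Gamma_C9 = Gamma9 in_C9"
  by (simp add: Gamma_C9_def Gamma9_def in_C9_def C9_eq)

lemma Gamma_B_eq: "Gamma_B = Gamma9 in_B"
  by (simp add: Gamma_B_def Gamma9_def in_B_def B_eq)

lemma Gamma_C3_eq: "Gamma_C3 = Gamma9 in_C3"
  by (simp add: Gamma_C3_def Gamma9_def in_C3_def C3_eq)

lemma mod9_subgroup_of_gen:
  assumes "gen 9 S = set L" and "(8,0,0,8) \<in> set L" and "list_all (\<lambda>m. red 9 (minv m) \<in> set L) L"
  shows "mod9_subgroup (\<lambda>m. m \<in> set L)"
  using assms gen_mult[of _ 9 S] gen.gen_one[of 9 S]
  by (auto simp: mod9_subgroup_def list_all_iff mone_def)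

lemma mod9_subgroup_C9: "mod9_subgroup in_C9"
proof -
  have "(8,0,0,8) \<in> set C9_list \<and> list_all (\<lambda>m. red 9 (minv m) \<in> set C9_list) C9_list"
    by code_simp
  then show ?thesis
    using mod9_subgroup_of_gen[OF C9_eq[unfolded C9_def]] by (simp add: in_C9_def[abs_def])
qed

lemma mod9_subgroup_B: "mod9_subgroup in_B"
proof -
  have "(8,0,0,8) \<in> set B_list \<and> list_all (\<lambda>m. red 9 (minv m) \<in> set B_list) B_list"
    by code_simp
  then show ?thesis
    using mod9_subgroup_of_gen[OF B_eq[unfolded Bgrp_def]] by (simp add: in_B_def[abs_def])
qed

lemma mod9_subgroup_C3: "mod9_subgroup in_C3"
proof -
  have cert: "(1,0,0,1) \<in> set C3_list \<and> (2,0,0,2) \<in> set C3_list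
    \<and> list_all (\<lambda>m. list_all (\<lambda>m'. red 3 (mmul m m') \<in> set C3_list) C3_list) C3_list
    \<and> list_all (\<lambda>m. red 3 (minv m) \<in> set C3_list) C3_list"
    by code_simp
  show ?thesis unfolding mod9_subgroup_def in_C3_def red_3_red_9
  proof (intro conjI allI impI)
    fix m m' assume "red 3 m \<in> set C3_list" "red 3 m' \<in> set C3_list"
    with cert have "red 3 (mmul (red 3 m) (red 3 m')) \<in> set C3_list"
      by (simp add: list_all_iff)
    then show "red 3 (mmul m m') \<in> set C3_list" by (simp only: red_mmul_left red_mmul_right)
  next
    fix m assume "red 3 m \<in> set C3_list"
    with cert have "red 3 (minv (red 3 m)) \<in> set C3_list" by (simp add: list_all_iff)
    then show "red 3 (minv m) \<in> set C3_list" by (simp only: red_minv)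
  qed (use cert in simp_all)
qed

lemma in_C9_le_in_B: "in_C9 \<le> in_B"
proof -
  have "list_all (\<lambda>m. m \<in> set B_list) C9_list" by code_simp
  then show ?thesis by (auto simp: in_C9_def in_B_def list_all_iff simp del: red.simps)
qed

lemma in_B_le_in_C3: "in_B \<le> in_C3"
proof -
  have "list_all (\<lambda>m. red 3 m \<in> set C3_list) B_list" by code_simp
  then show ?thesis by (auto simp: in_B_def in_C3_def list_all_iff simp del: red.simps)
qed

definition R3 :: "mat2 list" where
  "R3 = map (\<lambda>k. (1,k,0,1)) [-1..1]"

definition RB :: "mat2 list" where
  "RB = map (\<lambda>k. (1,k,0,1)) [-4..4]"

definition R9 :: "mat2 list" where
  "R9 = [
    (1,0,0,1), (1,1,0,1), (1,-1,0,1), (1,2,0,1), (-1,1,-1,0), (1,-2,0,1), (1,1,-1,0), (1,3,0,1),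
    (-2,1,-1,0), (-1,2,-1,1), (1,-3,0,1), (2,1,-1,0), (1,2,-1,-1), (1,4,0,1), (-2,-1,-1,-1), (-1,3,-1,2),
    (1,-4,0,1), (2,-1,-1,1), (1,3,-1,-2), (-2,-3,-1,-2), (-1,4,-1,3), (-3,-1,-2,-1), (2,-3,-1,2), (1,4,-1,-3),
    (-3,1,2,-1), (-1,5,-1,4), (-3,-4,-2,-3)]"

lemma coset_reps_C3: "coset_reps in_C3 R3"
proof (rule coset_repsI[OF mod9_subgroup_C3])
  show "coset_reps_cert in_C3 R3" by code_simp
qed

lemma coset_reps_B: "coset_reps in_B RB"
proof (rule coset_repsI[OF mod9_subgroup_B])
  show "coset_reps_cert in_B RB" by code_simp
qed

lemma coset_reps_C9: "coset_reps in_C9 R9"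
proof (rule coset_repsI[OF mod9_subgroup_C9])
  show "coset_reps_cert in_C9 R9" by code_simp
qed

interpretation C3_SL2: level9_cover in_C3 "\<lambda>_. True" R3
  by unfold_locales (simp_all add: mod9_subgroup_C3 mod9_subgroup_top coset_reps_C3 le_fun_def)

interpretation B_SL2: level9_cover in_B "\<lambda>_. True" RB
  by unfold_locales (simp_all add: mod9_subgroup_B mod9_subgroup_top coset_reps_B le_fun_def)

interpretation C9_SL2: level9_cover in_C9 "\<lambda>_. True" R9
  by unfold_locales (simp_all add: mod9_subgroup_C9 mod9_subgroup_top coset_reps_C9 le_fun_def)

interpretation C9_B: level9_cover in_C9 in_B R9
  by unfold_locales (simp_all add: mod9_subgroup_C9 mod9_subgroup_B in_C9_le_in_B coset_reps_C9)

interpretation B_C3: level9_cover in_B in_C3 RB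
  by unfold_locales (simp_all add: mod9_subgroup_B mod9_subgroup_C3 in_B_le_in_C3 coset_reps_B)


section \<open>The branching data\<close>

lemma le_top_pred: "P \<le> (\<lambda>_. True)"
  by (simp add: le_fun_def)

lemma act_identity: "base_point t \<Longrightarrow> act (1,0,0,1) t = t"
  by (simp add: act_mone[unfolded mone_def])

lemma branching_above_cusp:
  "card (fiber Gamma_C3 SL2Z cinf) = 1
   \<and> (\<forall>x \<in> orb SL2Z cinf. ram Gamma_C3 SL2Z x = 3)
   \<and> card (fiber Gamma_B SL2Z cinf) = 1
   \<and> (\<forall>x \<in> orb SL2Z cinf. ram Gamma_B SL2Z x = 9)
   \<and> card (fiber Gamma_C9 SL2Z cinf) = 3
   \<and> (\<forall>x \<in> orb SL2Z cinf. ram Gamma_C9 SL2Z x = 9)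
   \<and> (\<forall>x \<in> orb SL2Z cinf. ram Gamma_C9 Gamma_B x = 1)"
proof -
  note SW = stab_reps_cinf and g0 = SL2Z_T[of 0]
  have C3: "fiber_cert in_C3 (\<lambda>_. True) stab_cinf_mod9 R3 (1,0,0,1) [(1,0,0,1)]"
    and B: "fiber_cert in_B (\<lambda>_. True) stab_cinf_mod9 RB (1,0,0,1) [(1,0,0,1)]"
    and C9: "fiber_cert in_C9 (\<lambda>_. True) stab_cinf_mod9 R9 (1,0,0,1) [(1,0,0,1), (-1,1,-1,0), (-2,1,-1,0)]"
    by code_simp+
  have "list_all (\<lambda>x. ram_mod9 in_C3 (\<lambda>_. True) stab_cinf_mod9 x = 3) [(1,0,0,1)]"
    and "list_all (\<lambda>x. ram_mod9 in_B (\<lambda>_. True) stab_cinf_mod9 x = 9) [(1,0,0,1)]"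
    and "list_all (\<lambda>x. ram_mod9 in_C9 (\<lambda>_. True) stab_cinf_mod9 x = 9) [(1,0,0,1), (-1,1,-1,0), (-2,1,-1,0)]"
    and "list_all (\<lambda>x. ram_mod9 in_C9 in_B stab_cinf_mod9 x = 1) [(1,0,0,1), (-1,1,-1,0), (-2,1,-1,0)]"
    by code_simp+
  note rams = C3_SL2.ram_on_orbit[OF SW g0 C3 mod9_subgroup_top le_top_pred this(1)]
    B_SL2.ram_on_orbit[OF SW g0 B mod9_subgroup_top le_top_pred this(2)]
    C9_SL2.ram_on_orbit[OF SW g0 C9 mod9_subgroup_top le_top_pred this(3)]
    C9_SL2.ram_on_orbit[OF SW g0 C9 mod9_subgroup_B in_C9_le_in_B this(4)]
  show ?thesis
    using C3_SL2.card_fiber[OF SW g0 C3] B_SL2.card_fiber[OF SW g0 B] C9_SL2.card_fiber[OF SW g0 C9] rams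
    by (simp add: Gamma_C9_eq Gamma_B_eq Gamma_C3_eq Gamma9_top act_identity base_point_cinf)
qed

lemma branching_above_rho:
  "card (fiber Gamma_C3 SL2Z rho) = 1
   \<and> (\<forall>x \<in> orb SL2Z rho. ram Gamma_C3 SL2Z x = 3)
   \<and> card (fiber Gamma_B SL2Z rho) = 3
   \<and> (\<forall>x \<in> orb SL2Z rho. ram Gamma_B SL2Z x = 3)
   \<and> card (fiber Gamma_C9 SL2Z rho) = 9
   \<and> (\<forall>x \<in> orb SL2Z rho. ram Gamma_C9 SL2Z x = 3)
   \<and> (\<forall>x \<in> orb SL2Z rho. ram Gamma_C9 Gamma_B x = 1 \<and> ram Gamma_B Gamma_C3 x = 1)"
proof -
  note SW = stab_reps_rho and g0 = SL2Z_T[of 0]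
  define X9 :: "mat2 list" where "X9 = [(1,0,0,1), (1,-1,0,1), (1,2,0,1), (1,-2,0,1), (-1,2,-1,1),
    (1,-3,0,1), (-1,3,-1,2), (2,-1,-1,1), (1,4,-1,-3)]"
  have C3: "fiber_cert in_C3 (\<lambda>_. True) stab_rho R3 (1,0,0,1) [(1,0,0,1)]"
    and B: "fiber_cert in_B (\<lambda>_. True) stab_rho RB (1,0,0,1) [(1,0,0,1), (1,-1,0,1), (1,-3,0,1)]"
    and C9: "fiber_cert in_C9 (\<lambda>_. True) stab_rho R9 (1,0,0,1) X9"
    unfolding X9_def by code_simp+
  have "list_all (\<lambda>x. ram_mod9 in_C3 (\<lambda>_. True) stab_rho x = 3) [(1,0,0,1)]"
    and "list_all (\<lambda>x. ram_mod9 in_B (\<lambda>_. True) stab_rho x = 3) [(1,0,0,1), (1,-1,0,1), (1,-3,0,1)]"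
    and "list_all (\<lambda>x. ram_mod9 in_B in_C3 stab_rho x = 1) [(1,0,0,1), (1,-1,0,1), (1,-3,0,1)]"
    and "list_all (\<lambda>x. ram_mod9 in_C9 (\<lambda>_. True) stab_rho x = 3) X9"
    and "list_all (\<lambda>x. ram_mod9 in_C9 in_B stab_rho x = 1) X9"
    unfolding X9_def by code_simp+
  note rams = C3_SL2.ram_on_orbit[OF SW g0 C3 mod9_subgroup_top le_top_pred this(1)]
    B_SL2.ram_on_orbit[OF SW g0 B mod9_subgroup_top le_top_pred this(2)]
    B_SL2.ram_on_orbit[OF SW g0 B mod9_subgroup_C3 in_B_le_in_C3 this(3)]
    C9_SL2.ram_on_orbit[OF SW g0 C9 mod9_subgroup_top le_top_pred this(4)]
    C9_SL2.ram_on_orbit[OF SW g0 C9 mod9_subgroup_B in_C9_le_in_B this(5)]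
  show ?thesis
    using C3_SL2.card_fiber[OF SW g0 C3] B_SL2.card_fiber[OF SW g0 B] C9_SL2.card_fiber[OF SW g0 C9] rams
    by (simp add: Gamma_C9_eq Gamma_B_eq Gamma_C3_eq Gamma9_top act_identity base_point_rho X9_def)
qed

lemma branching_above_i_C3:
  "fiber Gamma_C3 SL2Z (pti 0) = {orb Gamma_C3 (pti 0), orb Gamma_C3 (pti 1), orb Gamma_C3 (pti (-1))}
   \<and> card (fiber Gamma_C3 SL2Z (pti 0)) = 3
   \<and> (\<forall>x \<in> orb SL2Z (pti 0). ram Gamma_C3 SL2Z x = 1)"
proof -
  have C3: "fiber_cert in_C3 (\<lambda>_. True) stab_i R3 (1,0,0,1) (map (\<lambda>j. (1,j,0,1)) [0, 1, -1])"
    and "list_all (\<lambda>x. ram_mod9 in_C3 (\<lambda>_. True) stab_i x = 1) (map (\<lambda>j. (1,j,0,1)) [0, 1, -1])"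
    by code_simp+
  from C3_SL2.ram_on_orbit[OF stab_reps_i SL2Z_T C3 mod9_subgroup_top le_top_pred this(2)]
    C3_SL2.fiber_i_translates[OF C3]
  show ?thesis by (simp add: Gamma_C3_eq Gamma9_top act_T_i)
qed

lemma branching_pi2_above_i:
  "fiber Gamma_B Gamma_C3 (pti 0) = {orb Gamma_B (pti 0), orb Gamma_B (pti 3)}
   \<and> card (fiber Gamma_B Gamma_C3 (pti 0)) = 2
   \<and> ram Gamma_B Gamma_C3 (pti 0) = 1 \<and> ram Gamma_B Gamma_C3 (pti 3) = 2
   \<and> fiber Gamma_B Gamma_C3 (pti (-1)) = {orb Gamma_B (pti (-1)), orb Gamma_B (pti (-4))}
   \<and> card (fiber Gamma_B Gamma_C3 (pti (-1))) = 2
   \<and> ram Gamma_B Gamma_C3 (pti (-1)) = 2 \<and> ram Gamma_B Gamma_C3 (pti (-4)) = 1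
   \<and> fiber Gamma_B Gamma_C3 (pti 1) = {orb Gamma_B (pti 1), orb Gamma_B (pti 4), orb Gamma_B (pti (-2))}
   \<and> card (fiber Gamma_B Gamma_C3 (pti 1)) = 3
   \<and> ram Gamma_B Gamma_C3 (pti 1) = 1 \<and> ram Gamma_B Gamma_C3 (pti 4) = 1
   \<and> ram Gamma_B Gamma_C3 (pti (-2)) = 1"
proof -
  have "fiber_cert in_B in_C3 stab_i RB (1,0,0,1) (map (\<lambda>j. (1,j,0,1)) [0, 3])"
    and "fiber_cert in_B in_C3 stab_i RB (1,-1,0,1) (map (\<lambda>j. (1,j,0,1)) [-1, -4])"
    and "fiber_cert in_B in_C3 stab_i RB (1,1,0,1) (map (\<lambda>j. (1,j,0,1)) [1, 4, -2])"
    by code_simp+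
  note fibers = this[THEN B_C3.fiber_i_translates]
  have "ram_mod9 in_B in_C3 stab_i (1,0,0,1) = 1 \<and> ram_mod9 in_B in_C3 stab_i (1,3,0,1) = 2
    \<and> ram_mod9 in_B in_C3 stab_i (1,-1,0,1) = 2 \<and> ram_mod9 in_B in_C3 stab_i (1,-4,0,1) = 1
    \<and> ram_mod9 in_B in_C3 stab_i (1,1,0,1) = 1 \<and> ram_mod9 in_B in_C3 stab_i (1,4,0,1) = 1
    \<and> ram_mod9 in_B in_C3 stab_i (1,-2,0,1) = 1"
    by code_simp
  moreover have "ram (Gamma9 in_B) (Gamma9 in_C3) (pti k) = ram_mod9 in_B in_C3 stab_i (1,k,0,1)" for k
    using ram_eq_ram_mod9[OF stab_reps_i mod9_subgroup_B mod9_subgroup_C3 SL2Z_T] by (simp add: act_T_i)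
  ultimately show ?thesis using fibers by (simp add: Gamma_B_eq Gamma_C3_eq)
qed

lemma C9_B_unramified_above_i:
  assumes "fiber_cert in_C9 in_B stab_i R9 (1,k,0,1) X" "length X = 3"
    and "list_all (\<lambda>x. ram_mod9 in_C9 in_B stab_i x = 1) X"
  shows "card (fiber Gamma_C9 Gamma_B (pti k)) = 3 \<and> (\<forall>x \<in> orb Gamma_B (pti k). ram Gamma_C9 Gamma_B x = 1)"
  using C9_B.card_fiber[OF stab_reps_i SL2Z_T assms(1)]
    C9_B.ram_on_orbit[OF stab_reps_i SL2Z_T assms(1) mod9_subgroup_B in_C9_le_in_B assms(3)] assms(2)
  by (simp add: Gamma_C9_eq Gamma_B_eq act_T_i)

lemma branching_pi1_unramified:
  "\<forall>k \<in> {3, -1, -4}. card (fiber Gamma_C9 Gamma_B (pti k)) = 3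
     \<and> (\<forall>x \<in> orb Gamma_B (pti k). ram Gamma_C9 Gamma_B x = 1)"
proof -
  have "card (fiber Gamma_C9 Gamma_B (pti 3)) = 3 \<and> (\<forall>x \<in> orb Gamma_B (pti 3). ram Gamma_C9 Gamma_B x = 1)"
    by (rule C9_B_unramified_above_i[where X = "[(1,3,0,1), (1,2,-1,-1), (-3,-4,-2,-3)]"]) code_simp+
  moreover have "card (fiber Gamma_C9 Gamma_B (pti (-1))) = 3
    \<and> (\<forall>x \<in> orb Gamma_B (pti (-1)). ram Gamma_C9 Gamma_B x = 1)"
    by (rule C9_B_unramified_above_i[where X = "[(1,-1,0,1), (-2,1,-1,0), (-1,3,-1,2)]"]) code_simp+
  moreover have "card (fiber Gamma_C9 Gamma_B (pti (-4))) = 3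
    \<and> (\<forall>x \<in> orb Gamma_B (pti (-4)). ram Gamma_C9 Gamma_B x = 1)"
    by (rule C9_B_unramified_above_i[where X = "[(1,-4,0,1), (2,-3,-1,2), (1,4,-1,-3)]"]) code_simp+
  ultimately show ?thesis by simp
qed

lemma C9_B_ramified_above_i:
  assumes cert: "fiber_cert in_C9 in_B stab_i R9 (1,k,0,1) [a, b]"
    and ram: "ram_mod9 in_C9 in_B stab_i a = 1" "ram_mod9 in_C9 in_B stab_i b = 2"
  shows "\<exists>x \<in> orb Gamma_B (pti k). \<exists>y \<in> orb Gamma_B (pti k).
    fiber Gamma_C9 Gamma_B (pti k) = {orb Gamma_C9 x, orb Gamma_C9 y}
    \<and> orb Gamma_C9 x \<noteq> orb Gamma_C9 y \<and> ram Gamma_C9 Gamma_B x = 1 \<and> ram Gamma_C9 Gamma_B y = 2"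
proof -
  have ab: "a \<in> SL2Z" "b \<in> SL2Z" "in_B (red 9 (mmul a (minv (1,k,0,1))))" "in_B (red 9 (mmul b (minv (1,k,0,1))))"
    using cert by (simp_all add: fiber_cert_def SL2Z_iff_mdet)
  have fiber: "fiber (Gamma9 in_C9) (Gamma9 in_B) (pti k) = {orb (Gamma9 in_C9) (act a (pti 0)), orb (Gamma9 in_C9) (act b (pti 0))}"
    using C9_B.fiber_eq[OF stab_reps_i SL2Z_T cert] by (simp add: act_T_i)
  moreover have "card (fiber (Gamma9 in_C9) (Gamma9 in_B) (pti k)) = 2"
    using C9_B.card_fiber[OF stab_reps_i SL2Z_T cert] by (simp add: act_T_i)
  moreover have "act a (pti 0) \<in> orb (Gamma9 in_B) (pti k)" "act b (pti 0) \<in> orb (Gamma9 in_B) (pti k)"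
    using act_mem_orb[where P = in_B, OF base_point_pti[of 0] SL2Z_T[of k] ab(1) ab(3)]
      act_mem_orb[where P = in_B, OF base_point_pti[of 0] SL2Z_T[of k] ab(2) ab(4)]
    by (simp_all add: act_T_i)
  moreover have "ram (Gamma9 in_C9) (Gamma9 in_B) (act a (pti 0)) = 1"
    "ram (Gamma9 in_C9) (Gamma9 in_B) (act b (pti 0)) = 2"
    using ram ram_eq_ram_mod9[OF stab_reps_i mod9_subgroup_C9 mod9_subgroup_B] ab by simp_all
  ultimately show ?thesis unfolding Gamma_C9_eq Gamma_B_eq by (metis card_2_iff doubleton_eq_iff)
qed

lemma branching_pi1_ramified:
  "\<forall>k \<in> {0, 1, 4, -2}. \<exists>x \<in> orb Gamma_B (pti k). \<exists>y \<in> orb Gamma_B (pti k).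
     fiber Gamma_C9 Gamma_B (pti k) = {orb Gamma_C9 x, orb Gamma_C9 y}
     \<and> orb Gamma_C9 x \<noteq> orb Gamma_C9 y
     \<and> ram Gamma_C9 Gamma_B x = 1 \<and> ram Gamma_C9 Gamma_B y = 2"
proof -
  let ?P = "\<lambda>k. \<exists>x \<in> orb Gamma_B (pti k). \<exists>y \<in> orb Gamma_B (pti k).
     fiber Gamma_C9 Gamma_B (pti k) = {orb Gamma_C9 x, orb Gamma_C9 y}
     \<and> orb Gamma_C9 x \<noteq> orb Gamma_C9 y
     \<and> ram Gamma_C9 Gamma_B x = 1 \<and> ram Gamma_C9 Gamma_B y = 2"
  have "?P 0" by (rule C9_B_ramified_above_i[where a = "(1,0,0,1)" and b = "(-1,2,-1,1)"]) code_simp+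
  moreover have "?P 1" by (rule C9_B_ramified_above_i[where a = "(-2,-3,-1,-2)" and b = "(1,1,0,1)"]) code_simp+
  moreover have "?P 4" by (rule C9_B_ramified_above_i[where a = "(1,4,0,1)" and b = "(1,3,-1,-2)"]) code_simp+
  moreover have "?P (-2)" by (rule C9_B_ramified_above_i[where a = "(-1,4,-1,3)" and b = "(1,-2,0,1)"]) code_simp+
  ultimately show ?thesis by simp
qed

theorem proposition3p3:
  shows
  \<comment> \<open>(1) above \<infinity>\<close>
  "card (fiber Gamma_C3 SL2Z cinf) = 1
   \<and> (\<forall>x \<in> orb SL2Z cinf. ram Gamma_C3 SL2Z x = 3)
   \<and> card (fiber Gamma_B SL2Z cinf) = 1
   \<and> (\<forall>x \<in> orb SL2Z cinf. ram Gamma_B SL2Z x = 9)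
   \<and> card (fiber Gamma_C9 SL2Z cinf) = 3
   \<and> (\<forall>x \<in> orb SL2Z cinf. ram Gamma_C9 SL2Z x = 9)
   \<and> (\<forall>x \<in> orb SL2Z cinf. ram Gamma_C9 Gamma_B x = 1)
  \<comment> \<open>(2) above \<rho>\<close>
   \<and> card (fiber Gamma_C3 SL2Z rho) = 1
   \<and> (\<forall>x \<in> orb SL2Z rho. ram Gamma_C3 SL2Z x = 3)
   \<and> card (fiber Gamma_B SL2Z rho) = 3
   \<and> (\<forall>x \<in> orb SL2Z rho. ram Gamma_B SL2Z x = 3)
   \<and> card (fiber Gamma_C9 SL2Z rho) = 9
   \<and> (\<forall>x \<in> orb SL2Z rho. ram Gamma_C9 SL2Z x = 3)
   \<and> (\<forall>x \<in> orb SL2Z rho. ram Gamma_C9 Gamma_B x = 1 \<and> ram Gamma_B Gamma_C3 x = 1)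
  \<comment> \<open>(3) above i: X_ns+(3)\<close>
   \<and> fiber Gamma_C3 SL2Z (pti 0) = {orb Gamma_C3 (pti 0), orb Gamma_C3 (pti 1), orb Gamma_C3 (pti (-1))}
   \<and> card (fiber Gamma_C3 SL2Z (pti 0)) = 3
   \<and> (\<forall>x \<in> orb SL2Z (pti 0). ram Gamma_C3 SL2Z x = 1)
  \<comment> \<open>pi_2 above the images of i, i-1, i+1\<close>
   \<and> fiber Gamma_B Gamma_C3 (pti 0) = {orb Gamma_B (pti 0), orb Gamma_B (pti 3)}
   \<and> card (fiber Gamma_B Gamma_C3 (pti 0)) = 2
   \<and> ram Gamma_B Gamma_C3 (pti 0) = 1 \<and> ram Gamma_B Gamma_C3 (pti 3) = 2
   \<and> fiber Gamma_B Gamma_C3 (pti (-1)) = {orb Gamma_B (pti (-1)), orb Gamma_B (pti (-4))}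
   \<and> card (fiber Gamma_B Gamma_C3 (pti (-1))) = 2
   \<and> ram Gamma_B Gamma_C3 (pti (-1)) = 2 \<and> ram Gamma_B Gamma_C3 (pti (-4)) = 1
   \<and> fiber Gamma_B Gamma_C3 (pti 1) = {orb Gamma_B (pti 1), orb Gamma_B (pti 4), orb Gamma_B (pti (-2))}
   \<and> card (fiber Gamma_B Gamma_C3 (pti 1)) = 3
   \<and> ram Gamma_B Gamma_C3 (pti 1) = 1 \<and> ram Gamma_B Gamma_C3 (pti 4) = 1
   \<and> ram Gamma_B Gamma_C3 (pti (-2)) = 1
  \<comment> \<open>pi_1 above the images in X_B\<close>
   \<and> (\<forall>k \<in> {3, -1, -4}. card (fiber Gamma_C9 Gamma_B (pti k)) = 3
        \<and> (\<forall>x \<in> orb Gamma_B (pti k). ram Gamma_C9 Gamma_B x = 1))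
   \<and> (\<forall>k \<in> {0, 1, 4, -2}. \<exists>x \<in> orb Gamma_B (pti k). \<exists>y \<in> orb Gamma_B (pti k).
        fiber Gamma_C9 Gamma_B (pti k) = {orb Gamma_C9 x, orb Gamma_C9 y}
        \<and> orb Gamma_C9 x \<noteq> orb Gamma_C9 y
        \<and> ram Gamma_C9 Gamma_B x = 1 \<and> ram Gamma_C9 Gamma_B y = 2)"
  using branching_above_cusp branching_above_rho branching_above_i_C3 branching_pi2_above_i
    branching_pi1_unramified branching_pi1_ramified
  by (elim conjE) (intro conjI; assumption)

end
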